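(* Let the sequences be generated by Algorithm iMBA and suppose Assumptions 2, 3 and 4 hold. Then there exist $\widehat k\in\mathbb{N}$ and $\widehat\gamma>0$ such that $\|x^{k+1}-\overline x^k\|\le\widehat\gamma\|x^{k+1}-x^k\|$ for all $k\ge\widehat k$.
   Context: Problem (P): $\min_{x\in\mathbb{R}^n}F(x):=g_0(x)+\delta_{\mathbb{R}^m_-}(g(x))+\phi(x)$, where $g=(g_1,\dots,g_m)^\top$ and $\delta_{\mathbb{R}^m_-}$ is the indicator of the nonpositive orthant. Assumption 1 (standing): (i) $g_0:\mathbb{R}^n\to(-\infty,\infty]$ is locally Lipschitz and upper-$\mathcal C^2$ at every point of an open convex set $\mathcal O\supset\Gamma:=\{x:g(x)\in\mathbb{R}^m_-\}\neq\emptyset$, and each $g_i:\mathbb{R}^n\to\mathbb{R}$, $i\in[m]$, is locally Lipschitz and upper-$\mathcal C^2$ at every point of $\mathbb{R}^n$; (ii) $\phi:\mathbb{R}^n\to\mathbb{R}$ is convex and $F$ is bounded below on $\Gamma$. $\partial$ denotes the limiting subdifferential; $\partial g(x):=\{V\in\mathbb{R}^{n\times m}: V_i\in\partial g_i(x)\ \forall i\}$. Define $G(x,s,V,L):=g(s)+V^\top(x-s)+\tfrac12\|x-s\|^2L$. Algorithm iMBA (parameters $0<\mu_{\min}\le\mu_{\max}$, $0<L_{\min}\le L_{\max}$, $M,\beta_C,\beta_S,\alpha>0$, $\tau>1$, $x^0\in\Gamma$): at iteration $k$ choose $\xi^k\in\partial g_0(x^k)$, $V^k\in\partial g(x^k)$,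 $\mu_{k,0}\in[\mu_{\min},\mu_{\max}]$, $L^{k,0}\in[L_{\min},L_{\max}]^m$; for $j=0,1,\dots$ choose self-adjoint $\mathcal Q_{k,j}$ with $\mu_{k,j}\mathcal I\preceq\mathcal Q_{k,j}\preceq(\mu_{k,j}+M)\mathcal I$, let $F_{k,j}(x):=g_0(x^k)+\langle\xi^k,x-x^k\rangle+\frac12\langle x-x^k,\mathcal Q_{k,j}(x-x^k)\rangle+\phi(x)$, $\Gamma_{k,j}:=\{x:G(x,x^k,V^k,L^{k,j})\in\mathbb{R}^m_-\}$, $\overline x^{k,j}$ the unique minimizer of $F_{k,j}$ on $\Gamma_{k,j}$, and compute $y^{k,j}$, $v^{k,j}\in\partial\phi(y^{k,j})$, $\lambda^{k,j}\in\mathbb{R}^m_+$ with $F_{k,j}(y^{k,j})\le F_{k,j}(x^k)$, $(-\langle\lambda^{k,j},G(y^{k,j},x^k,V^k,L^{k,j})\rangle)_++\|[G(y^{k,j},x^k,V^k,L^{k,j})]_+\|_\infty\le\frac{\beta_C}2\|y^{k,j}-x^k\|^2$ and $\|\xi^k+\mathcal Q_{k,j}(y^{k,j}-x^k)+v^{k,j}+V^k\lambda^{k,j}+\langle L^{k,j},\lambda^{k,j}\rangle(y^{k,j}-x^k)\|\le\beta_S\|y^{k,j}-x^k\|$. If $g(y^{k,j})\in\mathbb{R}^m_-$ and $F(y^{k,j})\le F(x^k)-\frac\alpha2\|y^{k,j}-x^k\|^2$, accept ($j_k:=j$); else if $g(y^{k,j})\notin\mathbb{R}^m_-$ set $L^{k,j+1}=\tau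 L^{k,j}$, $\mu_{k,j+1}=\mu_{k,j}$; else $L^{k,j+1}=L^{k,j}$, $\mu_{k,j+1}=\tau\mu_{k,j}$. Then $x^{k+1}:=y^{k,j_k}$, $(\mu_k,\mathcal Q_k,L^k,v^{k+1},\lambda^{k+1}):=(\mu_{k,j_k},\mathcal Q_{k,j_k},L^{k,j_k},v^{k,j_k},\lambda^{k,j_k})$, $\overline x^k:=\overline x^{k,j_k}$. Assumption 2: for each $k,j$, the multifunction $x\mapsto G(x,x^k,V^k,L^{k,j})-\mathbb{R}^m_-$ is metrically subregular at $(\overline x^{k,j},0)$. Assumption 3: $\{x^k\}$ is bounded; $\omega(x^0)$ denotes its set of cluster points. Parametric data: $\mathbb U:=\mathbb{R}^n\times\mathbb{R}^m_+\times\mathbb{R}^{n\times m}\times\mathbb{R}^n\times\mathbb S_+$ ($\mathbb S_+$ = positive semidefinite self-adjoint linear maps on $\mathbb{R}^n$); for $u=(s,L,V,\xi,\mathcal Q)$: $H(u,x):=G(x,s,V,L)$, so $\nabla_xH(u,x)\lambda=V\lambda+\langle L,\lambda\rangle(x-s)$; $\mathcal S(u):=\{x:H(u,x)\in\mathbb{R}^m_-\}$; $\Lambda(u,x,y):=\{\lambda\in\mathcal N_{\mathbb{R}^m_-}(H(u,x)):\nabla_xH(u,x)\lambda=y\}$. The partial bounded multiplier property (BMP) w.r.t. $x$ holds at $(u^*,x^* )$ with $x^*\in\mathcal S(u^* )$ if there exist $\kappa>0$ and a neighborhood $\mathcal U\times\mathcal V$ of $(u^*,x^* )$ such that for all $u\in\mathcal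 U$, $x\in\mathcal V\cap\mathcal S(u)$ and $y\in\mathcal N_{\mathcal S(u)}(x)$, $\Lambda(u,x,y)\cap\{\lambda:\|\lambda\|\le\kappa\|y\|\}\neq\emptyset$. Let $u^k:=(x^k,L^k,V^k,\xi^k,\mathcal Q_k)$. Assumption 4: the partial BMP w.r.t. $x$ holds at every cluster point of $\{(u^k,\overline x^k)\}_{k\in\mathbb{N}}$. *)

theory Defs
  imports "HOL-Analysis.Analysis" "HOL-Library.Extended_Real"
begin

definition regular_subdiff :: "('a::euclidean_space \<Rightarrow> real) \<Rightarrow> 'a \<Rightarrow> 'a set" where
  "regular_subdiff f x = {v. \<forall>e>0. \<exists>d>0. \<forall>z. norm (z - x) < d \<longrightarrow>
       f z \<ge> f x + inner v (z - x) - e * norm (z - x)}"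

definition limiting_subdiff :: "('a::euclidean_space \<Rightarrow> real) \<Rightarrow> 'a \<Rightarrow> 'a set" where
  "limiting_subdiff f x = {v. \<exists>xs vs. xs \<longlonglongrightarrow> x \<and> (\<lambda>k. f (xs k)) \<longlonglongrightarrow> f x \<and>
       vs \<longlonglongrightarrow> v \<and> (\<forall>k. vs k \<in> regular_subdiff f (xs k))}"

definition regular_normal :: "'a::euclidean_space set \<Rightarrow> 'a \<Rightarrow> 'a set" where
  "regular_normal C x = (if x \<in> C then {v. \<forall>e>0. \<exists>d>0. \<forall>z\<in>C. norm (z - x) < d \<longrightarrow>
       inner v (z - x) \<le> e * norm (z - x)} else {})"

definition limiting_normal :: "'a::euclidean_space set \<Rightarrow> 'a \<Rightarrow> 'a set" where
  "limiting_normal C x = (if x \<in> C then {v. \<exists>xs vs. (\<forall>k. xs k \<in> C) \<and> xs \<longlonglongrightarrow> x \<and>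
       vs \<longlonglongrightarrow> v \<and> (\<forall>k. vs k \<in> regular_normal C (xs k))} else {})"

definition loc_lipschitz_at :: "('a::euclidean_space \<Rightarrow> real) \<Rightarrow> 'a \<Rightarrow> bool" where
  "loc_lipschitz_at f x = (\<exists>d>0. \<exists>K. \<forall>a\<in>ball x d. \<forall>b\<in>ball x d. \<bar>f a - f b\<bar> \<le> K * norm (a - b))"

text \<open>Upper-C2 at a point: locally, f minus a quadratic is concave
  (i.e. -f is lower-C2, Rockafellar--Wets Thm 10.33).\<close>
definition upper_C2_at :: "('a::euclidean_space \<Rightarrow> real) \<Rightarrow> 'a \<Rightarrow> bool" where
  "upper_C2_at f x = (\<exists>d>0. \<exists>\<rho>\<ge>0. concave_on (ball x d) (\<lambda>z. f z - \<rho> / 2 * (norm z)\<^sup>2))"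

definition metric_subregular :: "('a::euclidean_space \<Rightarrow> 'b::euclidean_space set) \<Rightarrow> 'a \<Rightarrow> 'b \<Rightarrow> bool" where
  "metric_subregular Phi xb yb = (yb \<in> Phi xb \<and> (\<exists>\<kappa>>0. \<exists>d>0. \<forall>z\<in>ball xb d.
       infdist z {w. yb \<in> Phi w} \<le> \<kappa> * infdist yb (Phi z)))"

definition nonpos :: "(real^'m) set" where
  "nonpos = {z. \<forall>i. z $ i \<le> 0}"

definition nonneg :: "(real^'m) set" where
  "nonneg = {z. \<forall>i. z $ i \<ge> 0}"

definition feas :: "(real^'n \<Rightarrow> real^'m) \<Rightarrow> (real^'n) set" where
  "feas g = {x. g x \<in> nonpos}"

definition Fobj :: "(real^'n \<Rightarrow> real) \<Rightarrow> (real^'n \<Rightarrow> real^'m) \<Rightarrow> (real^'n \<Rightarrow> real) \<Rightarrow> real^'n \<Rightarrow> ereal" where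
  "Fobj g0 g phi x = (if g x \<in> nonpos then ereal (g0 x + phi x) else \<infinity>)"

text \<open>Matrices V in R^(n x m) are represented by their columns: V $ i = V_i in R^n.
  Hence V^T d = V *v d and V lambda = transpose V *v lambda.\<close>
definition Gmaj :: "(real^'n \<Rightarrow> real^'m) \<Rightarrow> real^'n \<Rightarrow> real^'n \<Rightarrow> real^'n^'m \<Rightarrow> real^'m \<Rightarrow> real^'m" where
  "Gmaj g x s V L = g s + V *v (x - s) + (1/2 * (norm (x - s))\<^sup>2) *\<^sub>R L"

text \<open>Gradient of H(u,.) applied to lambda: V lambda + <L,lambda>(x - s).\<close>
definition gradH :: "real^'n \<Rightarrow> real^'m \<Rightarrow> real^'n^'m \<Rightarrow> real^'n \<Rightarrow> real^'m \<Rightarrow> real^'n" where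
  "gradH s L V x lam = transpose V *v lam + inner L lam *\<^sub>R (x - s)"

definition Fmodel :: "(real^'n \<Rightarrow> real) \<Rightarrow> (real^'n \<Rightarrow> real) \<Rightarrow> real^'n \<Rightarrow> real^'n \<Rightarrow> real^'n^'n \<Rightarrow> real^'n \<Rightarrow> real" where
  "Fmodel g0 phi xk xi Q z = g0 xk + inner xi (z - xk) + 1/2 * inner (z - xk) (Q *v (z - xk)) + phi z"

definition pos_part :: "real^'m \<Rightarrow> real^'m" where
  "pos_part z = (\<chi> i. max (z $ i) 0)"

definition norm_inf :: "real^'m::finite \<Rightarrow> real" where
  "norm_inf z = Max (range (\<lambda>i. \<bar>z $ i\<bar>))"

type_synonym ('n,'m) param = "(real^'n) \<times> (real^'m) \<times> (real^'n^'m) \<times> (real^'n) \<times> (real^'n^'n)"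

definition Upar :: "('n::finite,'m::finite) param set" where
  "Upar = {(s, L, V, xi, Q). L \<in> nonneg \<and> transpose Q = Q \<and> (\<forall>z. 0 \<le> inner z (Q *v z))}"

definition Hpar :: "(real^'n \<Rightarrow> real^'m) \<Rightarrow> ('n::finite,'m::finite) param \<Rightarrow> real^'n \<Rightarrow> real^'m" where
  "Hpar g u x = (case u of (s, L, V, xi, Q) \<Rightarrow> Gmaj g x s V L)"

definition Spar :: "(real^'n \<Rightarrow> real^'m) \<Rightarrow> ('n::finite,'m::finite) param \<Rightarrow> (real^'n) set" where
  "Spar g u = {x. Hpar g u x \<in> nonpos}"

definition Lambda_par :: "(real^'n \<Rightarrow> real^'m) \<Rightarrow> ('n::finite,'m::finite) param \<Rightarrow> real^'n \<Rightarrow> real^'n \<Rightarrow> (real^'m) set" where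
  "Lambda_par g u x y = (case u of (s, L, V, xi, Q) \<Rightarrow>
      {lam. lam \<in> limiting_normal nonpos (Hpar g u x) \<and> gradH s L V x lam = y})"

definition partial_BMP :: "(real^'n \<Rightarrow> real^'m) \<Rightarrow> ('n::finite,'m::finite) param \<Rightarrow> real^'n \<Rightarrow> bool" where
  "partial_BMP g us xs = (xs \<in> Spar g us \<and> (\<exists>\<kappa>>0. \<exists>e>0.
      \<forall>u\<in>Upar. dist u us < e \<longrightarrow> (\<forall>x. dist x xs < e \<longrightarrow> x \<in> Spar g u \<longrightarrow>
        (\<forall>y\<in>limiting_normal (Spar g u) x.
           (\<exists>lam\<in>Lambda_par g u x y. norm lam \<le> \<kappa> * norm y)))))"

definition cluster_point :: "(nat \<Rightarrow> 'a::metric_space) \<Rightarrow> 'a \<Rightarrow> bool" where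
  "cluster_point z p = (\<exists>r. strict_mono r \<and> (z \<circ> r) \<longlonglongrightarrow> p)"

end

theory Submission
  imports Defs
begin

text \<open>
  The accepted trial point \<open>y = x (Suc k)\<close> and \<open>xbar k (jk k)\<close> are an inexact and the exact
  solution of the same subproblem, whose objective is strongly convex with modulus at least
  \<open>mumin\<close>. Comparing the model values at the two points in both directions, via the approximate
  stationarity and complementarity of \<open>(y, v, lam)\<close> on one side and via a KKT multiplier \<open>lb\<close>
  of \<open>xbar\<close> on the other, gives, with \<open>t = norm (y - x k)\<close>,
  \<open>mumin * norm (y - xbar)\<^sup>2 \<le> betaS * t * norm (y - xbar) + betaC/2 * (1 + CARD('m) * norm lb) * t\<^sup>2\<close>,
  hence \<open>norm (y - xbar) \<le> gam * t\<close> as soon as the multipliers are bounded.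

  The subproblem is convex, so minus the gradient of its objective at \<open>xbar\<close> is a normal vector
  to its feasible set, and the partial bounded multiplier property at the cluster points of the
  data \<open>(u k, xbar k)\<close> turns it into multipliers of uniformly bounded norm for all large \<open>k\<close>.
  This needs the data to stay bounded: the iterates stay in a compact part of the feasible set,
  local Lipschitz continuity bounds the subgradients, and the backtracking stops increasing
  \<open>L\<close> and \<open>mu\<close> once they exceed curvature constants that upper-\<open>C\<^sup>2\<close> regularity provides
  uniformly on compact sets.
\<close>

section \<open>The quadratic model and the majorant\<close>

lemma inner_transpose_matrix_vector:
  "inner (lam::real^'m) (V *v d) = inner (transpose V *v lam) (d::real^'n)"
  by (simp add: dot_lmul_matrix)

lemma inner_symmetric_matrix:
  assumes "transpose Q = Q"
  shows "inner (a::real^'n) (Q *v b) = inner (Q *v a) b"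
  by (metis assms inner_commute inner_transpose_matrix_vector)

lemma quadratic_form_add:
  assumes "transpose Q = Q"
  shows "inner ((a::real^'n) + b) (Q *v (a + b))
           = inner a (Q *v a) + 2 * inner (Q *v a) b + inner b (Q *v b)"
  using inner_symmetric_matrix[OF assms, of b a]
  by (simp add: matrix_vector_right_distrib inner_add_left inner_add_right inner_commute)

lemma quadratic_form_convex_combination:
  fixes Q :: "real^'n^'n"
  assumes "transpose Q = Q"
  shows "inner ((1 - t) *\<^sub>R a + t *\<^sub>R b) (Q *v ((1 - t) *\<^sub>R a + t *\<^sub>R b))
           = (1 - t) * inner a (Q *v a) + t * inner b (Q *v b) - (1 - t) * t * inner (a - b) (Q *v (a - b))"
  using inner_symmetric_matrix[OF assms, of b a]
  by (simp add: matrix_vector_right_distrib matrix_vector_mult_diff_distrib matrix_vector_mult_scaleR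
      inner_add_left inner_add_right inner_diff_left inner_diff_right inner_commute algebra_simps)

lemma norm_square_convex_combination:
  fixes a b :: "'a::real_inner"
  shows "(norm ((1 - t) *\<^sub>R a + t *\<^sub>R b))\<^sup>2
           = (1 - t) * (norm a)\<^sup>2 + t * (norm b)\<^sup>2 - (1 - t) * t * (norm (a - b))\<^sup>2"
  by (simp add: power2_norm_eq_inner inner_add_left inner_add_right inner_diff_left
      inner_diff_right inner_commute algebra_simps)

lemma Gmaj_component:
  "Gmaj g z s V L $ i = g s $ i + inner (V $ i) (z - s) + 1/2 * (norm (z - s))\<^sup>2 * L $ i"
  by (simp add: Gmaj_def matrix_vector_mult_def inner_vec_def)

lemma inner_Gmaj_diff:
  "inner lam (Gmaj g z s V L) - inner lam (Gmaj g w s V L)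
     = inner (gradH s L V w lam) (z - w) + inner L lam / 2 * (norm (z - w))\<^sup>2"
proof -
  have inner_G: "inner lam (Gmaj g z s V L)
      = inner lam (g s) + inner (transpose V *v lam) (z - s) + 1/2 * (norm (z - s))\<^sup>2 * inner L lam"
    for z by (simp add: Gmaj_def inner_add_right inner_transpose_matrix_vector inner_commute)
  have sq: "(norm (z - s))\<^sup>2 = (norm (w - s))\<^sup>2 + 2 * inner (w - s) (z - w) + (norm (z - w))\<^sup>2"
    using dot_norm[of "w - s" "z - w"] by simp
  have "inner (transpose V *v lam) (z - s) - inner (transpose V *v lam) (w - s)
      = inner (transpose V *v lam) (z - w)"
    by (simp add: inner_diff_right)
  then show ?thesis
    unfolding inner_G sq by (simp add: gradH_def inner_add_left algebra_simps)
qed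

lemma Fmodel_diff:
  assumes "transpose Q = Q"
  shows "Fmodel g0 phi xk xi Q z - Fmodel g0 phi xk xi Q w
           = inner (xi + Q *v (w - xk)) (z - w) + 1/2 * inner (z - w) (Q *v (z - w)) + phi z - phi w"
proof -
  have "inner (z - xk) (Q *v (z - xk))
          = inner (w - xk) (Q *v (w - xk)) + 2 * inner (Q *v (w - xk)) (z - w) + inner (z - w) (Q *v (z - w))"
    using quadratic_form_add[OF assms, of "w - xk" "z - w"] by simp
  then show ?thesis
    by (simp add: Fmodel_def inner_add_left inner_diff_right algebra_simps)
qed

lemma convex_sublevel:
  assumes "convex_on UNIV f"
  shows "convex {z. f z \<le> (c::real)}"
proof (rule convexI)
  fix a b and u t :: real
  assume "a \<in> {z. f z \<le> c}" "b \<in> {z. f z \<le> c}" "0 \<le> u" "0 \<le> t" "u + t = 1"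
  then have "f (u *\<^sub>R a + t *\<^sub>R b) \<le> u * f a + t * f b"
    using assms unfolding convex_on_def by blast
  also have "\<dots> \<le> u * c + t * c"
    using \<open>a \<in> _\<close> \<open>b \<in> _\<close> \<open>0 \<le> u\<close> \<open>0 \<le> t\<close> by (intro add_mono mult_left_mono) auto
  finally show "u *\<^sub>R a + t *\<^sub>R b \<in> {z. f z \<le> c}"
    using \<open>u + t = 1\<close> by (simp add: distrib_right[symmetric])
qed

lemma Fmodel_convex:
  fixes Q :: "real^'n^'n"
  assumes sym: "transpose Q = Q" and psd: "\<And>z. 0 \<le> inner z (Q *v z)" and "convex_on UNIV phi"
  shows "convex_on UNIV (Fmodel g0 phi xk xi Q)"
proof -
  define q where "q = (\<lambda>z. g0 xk + inner xi (z - xk) + 1/2 * inner (z - xk) (Q *v (z - xk)))"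
  have "convex_on UNIV q"
  proof (rule convex_onI)
    fix t :: real and a b :: "real^'n"
    assume t: "0 < t" "t < 1"
    define A B where "A = a - xk" and "B = b - xk"
    have comb: "(1 - t) *\<^sub>R a + t *\<^sub>R b - xk = (1 - t) *\<^sub>R A + t *\<^sub>R B" and ab: "a - b = A - B"
      by (simp_all add: A_def B_def algebra_simps)
    have "(1 - t) * q a + t * q b - q ((1 - t) *\<^sub>R a + t *\<^sub>R b)
                 = (1 - t) * t * inner (a - b) (Q *v (a - b)) / 2"
      unfolding q_def comb A_def[symmetric] B_def[symmetric] ab quadratic_form_convex_combination[OF sym]
      by (simp add: inner_add_right algebra_simps diff_divide_distrib add_divide_distrib)
    moreover have "0 \<le> (1 - t) * t * inner (a - b) (Q *v (a - b))"
      using t psd[of "a - b"] by simp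
    ultimately show "q ((1 - t) *\<^sub>R a + t *\<^sub>R b) \<le> (1 - t) * q a + t * q b"
      by linarith
  qed simp
  then show ?thesis
    using convex_on_add[OF _ assms(3)] unfolding Fmodel_def q_def by blast
qed

lemma Gmaj_feasible_set_convex:
  fixes g :: "real^'n \<Rightarrow> real^'m"
  assumes "\<And>i. L $ i \<ge> 0"
  shows "convex {z. Gmaj g z s V L \<in> nonpos}"
proof -
  have "convex_on UNIV (\<lambda>z. Gmaj g z s V L $ i)" for i
  proof (rule convex_onI)
    fix t :: real and a b :: "real^'n"
    assume t: "0 < t" "t < 1"
    define A B where "A = a - s" and "B = b - s"
    have comb: "(1 - t) *\<^sub>R a + t *\<^sub>R b - s = (1 - t) *\<^sub>R A + t *\<^sub>R B" and ab: "a - b = A - B"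
      by (simp_all add: A_def B_def algebra_simps)
    have "(1 - t) * Gmaj g a s V L $ i + t * Gmaj g b s V L $ i
                 - Gmaj g ((1 - t) *\<^sub>R a + t *\<^sub>R b) s V L $ i
               = (1 - t) * t * (norm (a - b))\<^sup>2 * L $ i / 2"
      unfolding Gmaj_component comb A_def[symmetric] B_def[symmetric] ab norm_square_convex_combination
      by (simp add: inner_add_right algebra_simps diff_divide_distrib add_divide_distrib)
    moreover have "0 \<le> (1 - t) * t * (norm (a - b))\<^sup>2 * L $ i"
      using t assms[of i] by simp
    ultimately show "Gmaj g ((1 - t) *\<^sub>R a + t *\<^sub>R b) s V L $ i
                 \<le> (1 - t) * Gmaj g a s V L $ i + t * Gmaj g b s V L $ i"
      by linarith
  qed simp
  then have "convex (\<Inter>i. {z. Gmaj g z s V L $ i \<le> 0})"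
    by (intro convex_INT convex_sublevel)
  moreover have "{z. Gmaj g z s V L \<in> nonpos} = (\<Inter>i. {z. Gmaj g z s V L $ i \<le> 0})"
    by (auto simp: nonpos_def)
  ultimately show ?thesis by simp
qed

section \<open>Convex analysis\<close>

lemma le_of_forall_pos_le_add_mult:
  fixes a b c :: real
  assumes "\<And>e. e > 0 \<Longrightarrow> b \<le> a + e * c"
  shows "b \<le> a"
proof (cases "c > 0")
  case True
  show ?thesis
  proof (rule field_le_epsilon)
    fix e :: real
    assume "e > 0"
    then show "b \<le> a + e" using assms[of "e / c"] True by simp
  qed
next
  case False
  then show ?thesis using assms[of 1] by simp
qed

lemma convex_subgradient_from_first_order:
  fixes phi :: "'a::real_normed_vector \<Rightarrow> real"
  assumes cvx: "convex_on UNIV phi"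
    and first_order: "\<And>e. e > 0 \<Longrightarrow> \<exists>s. 0 < s \<and> s \<le> 1 \<and>
           s * c - s * e \<le> phi (x + s *\<^sub>R (w - x)) - phi x"
  shows "phi x + c \<le> phi w"
proof -
  have le: "c \<le> phi w - phi x + e" if "e > 0" for e
  proof -
    obtain s where s: "0 < s" "s \<le> 1" and le: "s * c - s * e \<le> phi (x + s *\<^sub>R (w - x)) - phi x"
      using first_order[OF \<open>e > 0\<close>] by blast
    have "phi (x + s *\<^sub>R (w - x)) \<le> (1 - s) * phi x + s * phi w"
      using convex_onD[OF cvx, of s x w] s by (simp add: algebra_simps)
    then have "s * (c - e) \<le> s * (phi w - phi x)"
      using le by (simp add: algebra_simps)
    then show ?thesis using s by simp
  qed
  have "c \<le> phi w - phi x"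
    by (rule field_le_epsilon) (rule le)
  then show ?thesis by simp
qed

lemma convex_regular_subgradient:
  fixes phi :: "'a::euclidean_space \<Rightarrow> real"
  assumes cvx: "convex_on UNIV phi" and v: "v \<in> regular_subdiff phi x"
  shows "phi x + inner v (w - x) \<le> phi w"
proof (rule convex_subgradient_from_first_order[OF cvx])
  fix e :: real
  assume "e > 0"
  define d where "d = w - x"
  define N where "N = norm d + 1"
  have "N > 0" by (simp add: N_def add_nonneg_pos)
  then have "e / N > 0" using \<open>e > 0\<close> by simp
  then obtain \<delta> where "\<delta> > 0" and \<delta>: "\<And>z. norm (z - x) < \<delta> \<Longrightarrow>
      phi x + inner v (z - x) - e / N * norm (z - x) \<le> phi z"
    using v unfolding regular_subdiff_def by blast
  define s where "s = min 1 (\<delta> / (2 * N))"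
  have s: "0 < s" "s \<le> 1" using \<open>\<delta> > 0\<close> \<open>N > 0\<close> by (auto simp: s_def)
  have "s \<le> \<delta> / (2 * N)" by (simp add: s_def)
  then have "s * (2 * N) \<le> \<delta>" using \<open>N > 0\<close> by (simp add: pos_le_divide_eq)
  moreover have "s * norm d \<le> s * N" using s by (intro mult_left_mono) (auto simp: N_def)
  moreover have "0 < s * N" using s \<open>N > 0\<close> by simp
  moreover have "s * (2 * N) = 2 * (s * N)" by simp
  ultimately have "s * norm d < \<delta>" by linarith
  then have "norm (s *\<^sub>R d) < \<delta>"
    using s by simp
  then have "phi x + s * inner v d - e / N * (s * norm d) \<le> phi (x + s *\<^sub>R d)"
    using \<delta>[of "x + s *\<^sub>R d"] s by simp
  moreover have "e / N * (s * norm d) \<le> s * e"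
    using s \<open>e > 0\<close> \<open>N > 0\<close> by (simp add: N_def field_simps mult_left_mono)
  ultimately have "s * inner v (w - x) - s * e \<le> phi (x + s *\<^sub>R (w - x)) - phi x"
    unfolding d_def by linarith
  then show "\<exists>s. 0 < s \<and> s \<le> 1 \<and> s * inner v (w - x) - s * e \<le> phi (x + s *\<^sub>R (w - x)) - phi x"
    using s by blast
qed

lemma convex_limiting_subgradient:
  fixes phi :: "'a::euclidean_space \<Rightarrow> real"
  assumes cvx: "convex_on UNIV phi" and v: "v \<in> limiting_subdiff phi x"
  shows "phi x + inner v (w - x) \<le> phi w"
proof -
  obtain xs vs where "xs \<longlonglongrightarrow> x" "(\<lambda>k. phi (xs k)) \<longlonglongrightarrow> phi x" "vs \<longlonglongrightarrow> v"
    and reg: "\<And>k. vs k \<in> regular_subdiff phi (xs k)"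
    using v unfolding limiting_subdiff_def by blast
  then have "(\<lambda>k. phi (xs k) + inner (vs k) (w - xs k)) \<longlonglongrightarrow> phi x + inner v (w - x)"
    by (intro tendsto_intros)
  then show ?thesis
    by (rule tendsto_upperbound) (use convex_regular_subgradient[OF cvx reg] in auto)
qed

lemma subgradient_of_quadratic_perturbation:
  fixes Q :: "real^'n^'n"
  assumes cvx: "convex_on UNIV phi"
    and lower: "\<And>z. inner vb (z - xb) - 1/2 * inner (z - xb) (Q *v (z - xb)) \<le> phi z - phi xb"
  shows "phi xb + inner vb (w - xb) \<le> phi w"
proof (rule convex_subgradient_from_first_order[OF cvx])
  fix e :: real
  assume "e > 0"
  define d where "d = w - xb"
  define q where "q = \<bar>inner d (Q *v d)\<bar>"
  define s where "s = min 1 (e / (q + 1))"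
  have "q \<ge> 0" by (simp add: q_def)
  then have s: "0 < s" "s \<le> 1" using \<open>e > 0\<close> by (auto simp: s_def)
  have "s \<le> e / (q + 1)" by (simp add: s_def)
  then have "s * (q + 1) \<le> e" using \<open>q \<ge> 0\<close> by (simp add: pos_le_divide_eq)
  then have "s * q \<le> e" using s by (simp add: distrib_left)
  have "s * s * inner d (Q *v d) \<le> s * (s * q)"
    using s by (simp add: q_def mult_left_mono)
  also have "\<dots> \<le> s * e"
    using s \<open>s * q \<le> e\<close> by (simp add: mult_left_mono)
  finally have "1/2 * (s * s * inner d (Q *v d)) \<le> s * e"
    using mult_pos_pos[OF \<open>0 < s\<close> \<open>e > 0\<close>] by linarith
  moreover have "s * inner vb d - 1/2 * (s * s * inner d (Q *v d)) \<le> phi (xb + s *\<^sub>R d) - phi xb"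
    using lower[of "xb + s *\<^sub>R d"] by (simp add: matrix_vector_mult_scaleR)
  ultimately have "s * inner vb (w - xb) - s * e \<le> phi (xb + s *\<^sub>R (w - xb)) - phi xb"
    unfolding d_def by linarith
  then show "\<exists>s. 0 < s \<and> s \<le> 1 \<and> s * inner vb (w - xb) - s * e \<le> phi (xb + s *\<^sub>R (w - xb)) - phi xb"
    using s by blast
qed

lemma convex_subgradient_norm_le:
  fixes phi :: "'a::euclidean_space \<Rightarrow> real"
  assumes sub: "\<And>w. phi x + inner v (w - x) \<le> phi w"
    and bound: "\<And>z. norm z \<le> R + 1 \<Longrightarrow> \<bar>phi z\<bar> \<le> B" and "norm x \<le> R"
  shows "norm v \<le> 2 * B"
proof (cases "v = 0")
  case True
  then show ?thesis using bound[of x] \<open>norm x \<le> R\<close> by simp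
next
  case False
  define w where "w = x + (1 / norm v) *\<^sub>R v"
  have "norm w \<le> R + 1"
    using norm_triangle_ineq[of x "(1 / norm v) *\<^sub>R v"] False \<open>norm x \<le> R\<close> by (simp add: w_def)
  moreover have "inner v (w - x) = norm v"
    using False by (simp add: w_def power2_norm_eq_inner[symmetric] power2_eq_square)
  ultimately show ?thesis
    using sub[of w] bound[of w] bound[of x] \<open>norm x \<le> R\<close> by simp
qed

lemma convex_linear_lower_growth:
  fixes phi :: "'a::euclidean_space \<Rightarrow> real"
  assumes cvx: "convex_on UNIV phi"
    and bound: "\<And>z. norm z \<le> R + 1 \<Longrightarrow> \<bar>phi z\<bar> \<le> B" and "norm x \<le> R"
    and far: "norm (z - x) \<ge> 1"
  shows "- 2 * B * norm (z - x) \<le> phi z - phi x"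
proof -
  define t where "t = norm (z - x)"
  have t: "t \<ge> 1" using far by (simp add: t_def)
  define p where "p = x + (1 / t) *\<^sub>R (z - x)"
  have "norm p \<le> R + 1"
    using norm_triangle_ineq[of x "(1 / t) *\<^sub>R (z - x)"] t \<open>norm x \<le> R\<close>
    by (simp add: p_def t_def split: if_splits)
  then have "- 2 * B \<le> phi p - phi x"
    using bound[of p] bound[of x] \<open>norm x \<le> R\<close> by simp
  then have "t * (- 2 * B) \<le> t * (phi p - phi x)"
    using t by (intro mult_left_mono) auto
  moreover have "phi p \<le> (1 - 1 / t) * phi x + (1 / t) * phi z"
    using convex_onD[OF cvx, of "1 / t" x z] t by (simp add: p_def algebra_simps)
  then have "t * (phi p - phi x) \<le> phi z - phi x"
    using t by (simp add: field_simps)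
  ultimately show ?thesis by (simp add: t_def algebra_simps)
qed

lemma epigraph_separation_nonvertical:
  fixes h :: "'a::real_inner \<Rightarrow> real"
  assumes epi: "\<And>z r. h z \<le> r \<Longrightarrow> inner a1 z + a2 * r \<le> b" and "(a1, a2) \<noteq> 0"
  shows "a2 < 0"
proof (rule ccontr)
  assume "\<not> a2 < 0"
  show False
  proof (cases "a2 = 0")
    case True
    then have "a1 \<noteq> 0" using \<open>(a1, a2) \<noteq> 0\<close> by (auto simp: zero_prod_def)
    define z where "z = ((\<bar>b\<bar> + 1) / inner a1 a1) *\<^sub>R a1"
    have "inner a1 z = \<bar>b\<bar> + 1" using \<open>a1 \<noteq> 0\<close> by (simp add: z_def)
    then show False using epi[of z "h z"] True by simp
  next
    case False
    with \<open>\<not> a2 < 0\<close> have "a2 > 0" by simp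
    define c where "c = \<bar>b - a2 * h 0\<bar> + 1"
    define r where "r = h 0 + c / a2"
    have "h 0 \<le> r" using \<open>a2 > 0\<close> by (simp add: r_def c_def)
    moreover have "a2 * r = a2 * h 0 + c"
      using \<open>a2 > 0\<close> by (simp add: r_def distrib_left)
    then have "b < a2 * r" unfolding c_def by linarith
    ultimately show False using epi[of 0 r] by simp
  qed
qed

lemma convex_minimizer_subgradient:
  fixes h :: "'a::euclidean_space \<Rightarrow> real"
  assumes hc: "convex_on UNIV h" and S: "convex S" and xS: "xb \<in> S" and min: "\<forall>z\<in>S. h xb \<le> h z"
  shows "\<exists>g. (\<forall>z. h xb + inner g (z - xb) \<le> h z) \<and> (\<forall>z\<in>S. 0 \<le> inner g (z - xb))"
proof -
  have "convex (epigraph UNIV h)" using hc by (simp add: convex_epigraph)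
  moreover have "convex (S \<times> {..<h xb})" using S by (intro convex_Times) auto
  moreover have "(xb, h xb) \<in> epigraph UNIV h" "(xb, h xb - 1) \<in> S \<times> {..<h xb}"
    using xS by (auto simp: mem_epigraph)
  moreover have "epigraph UNIV h \<inter> (S \<times> {..<h xb}) = {}"
    using min by (force simp: epigraph_def)
  ultimately obtain a b where "a \<noteq> 0" and epi: "\<forall>p\<in>epigraph UNIV h. inner a p \<le> b"
    and below: "\<forall>p\<in>S \<times> {..<h xb}. b \<le> inner a p"
    using separating_hyperplane_sets[of "epigraph UNIV h" "S \<times> {..<h xb}"] by blast
  obtain a1 a2 where a: "a = (a1, a2)" by fastforce
  have epi': "inner a1 z + a2 * r \<le> b" if "h z \<le> r" for z r
    using bspec[OF epi, of "(z, r)"] that by (simp add: a mem_epigraph)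
  have below': "b \<le> inner a1 z + a2 * h xb" if "z \<in> S" for z
  proof (rule le_of_forall_pos_le_add_mult)
    fix e :: real
    assume "e > 0"
    then have "b \<le> inner a1 z + a2 * (h xb - e)"
      using bspec[OF below, of "(z, h xb - e)"] \<open>z \<in> S\<close> \<open>e > 0\<close> by (simp add: a)
    then show "b \<le> inner a1 z + a2 * h xb + e * (- a2)" by (simp add: algebra_simps)
  qed
  have "a2 < 0"
    using epigraph_separation_nonvertical[of h a1 a2 b] epi' \<open>a \<noteq> 0\<close> a by blast
  define gr where "gr = (- 1 / a2) *\<^sub>R a1"
  have "h xb + inner gr (z - xb) \<le> h z" for z
  proof -
    have "inner a1 (z - xb) \<le> - a2 * (h z - h xb)"
      using epi'[of z "h z"] below'[OF xS] by (simp add: inner_diff_right algebra_simps)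
    then show ?thesis using \<open>a2 < 0\<close> by (simp add: gr_def field_simps)
  qed
  moreover have "0 \<le> inner gr (z - xb)" if "z \<in> S" for z
  proof -
    have "0 \<le> inner a1 (z - xb)"
      using epi'[of xb "h xb"] below'[OF that] by (simp add: inner_diff_right)
    then show ?thesis using \<open>a2 < 0\<close> by (simp add: gr_def field_simps)
  qed
  ultimately show ?thesis by blast
qed

lemma Fmodel_minimizer_optimality:
  fixes Q :: "real^'n^'n"
  assumes sym: "transpose Q = Q" and psd: "\<And>z. 0 \<le> inner z (Q *v z)" and cvx: "convex_on UNIV phi"
    and S: "convex S" and xS: "xb \<in> S"
    and min: "\<forall>z\<in>S. Fmodel g0 phi xk xi Q xb \<le> Fmodel g0 phi xk xi Q z"
  shows "\<exists>vb. (\<forall>w. phi xb + inner vb (w - xb) \<le> phi w)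
              \<and> (\<forall>z\<in>S. 0 \<le> inner (xi + Q *v (xb - xk) + vb) (z - xb))"
proof -
  obtain gk where sub: "\<And>z. Fmodel g0 phi xk xi Q xb + inner gk (z - xb) \<le> Fmodel g0 phi xk xi Q z"
    and normal: "\<forall>z\<in>S. 0 \<le> inner gk (z - xb)"
    using convex_minimizer_subgradient[OF Fmodel_convex[OF sym psd cvx] S xS min] by blast
  define vb where "vb = gk - (xi + Q *v (xb - xk))"
  have "inner vb (z - xb) - 1/2 * inner (z - xb) (Q *v (z - xb)) \<le> phi z - phi xb" for z
    using sub[of z] Fmodel_diff[OF sym, of g0 phi xk xi z xb]
    by (simp add: vb_def inner_diff_left)
  then have "\<forall>w. phi xb + inner vb (w - xb) \<le> phi w"
    using subgradient_of_quadratic_perturbation[OF cvx] by blast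
  moreover have "xi + Q *v (xb - xk) + vb = gk" by (simp add: vb_def)
  ultimately show ?thesis using normal by metis
qed

lemma limiting_normal_of_convex_normal:
  assumes "x \<in> C" and "\<forall>z\<in>C. inner a (z - x) \<le> 0"
  shows "a \<in> limiting_normal C x"
proof -
  have "a \<in> regular_normal C x"
    unfolding regular_normal_def using assms
    by (auto intro!: exI[of _ 1] order_trans[OF _ mult_nonneg_nonneg])
  then have "\<exists>xs vs. (\<forall>k. xs k \<in> C) \<and> xs \<longlonglongrightarrow> x \<and> vs \<longlonglongrightarrow> a \<and> (\<forall>k. vs k \<in> regular_normal C (xs k))"
    using \<open>x \<in> C\<close> by (intro exI[of _ "\<lambda>k. x"] exI[of _ "\<lambda>k. a"]) simp
  then show ?thesis
    unfolding limiting_normal_def using \<open>x \<in> C\<close> by simp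
qed

lemma regular_normal_nonpos:
  assumes z: "(z::real^'m) \<in> nonpos" and v: "v \<in> regular_normal nonpos z"
  shows "0 \<le> v $ i \<and> v $ i * z $ i = 0"
proof (cases "v $ i = 0")
  case False
  then obtain d where "d > 0" and d: "\<forall>w\<in>nonpos. norm (w - z) < d \<longrightarrow>
      inner v (w - z) \<le> \<bar>v $ i\<bar> / 2 * norm (w - z)"
    using v z unfolding regular_normal_def by (auto dest!: spec[of _ "\<bar>v $ i\<bar> / 2"])
  have move: "t * v $ i \<le> \<bar>v $ i\<bar> / 2 * \<bar>t\<bar>" if "\<bar>t\<bar> < d" "z $ i + t \<le> 0" for t
  proof -
    have "z + t *\<^sub>R axis i 1 \<in> nonpos"
      using z that(2) by (auto simp: nonpos_def axis_def)
    then show ?thesis using d that(1) by (auto simp: inner_axis)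
  qed
  have "0 \<le> v $ i"
  proof (rule ccontr)
    assume "\<not> 0 \<le> v $ i"
    moreover have "z $ i \<le> 0" using z by (simp add: nonpos_def)
    then have "- d / 2 * v $ i \<le> \<bar>v $ i\<bar> / 2 * \<bar>- d / 2\<bar>"
      using \<open>d > 0\<close> by (intro move) auto
    ultimately show False
      using mult_pos_neg[of d "v $ i"] \<open>d > 0\<close> by (simp add: abs_if algebra_simps)
  qed
  moreover have "z $ i = 0"
  proof (rule ccontr)
    assume "z $ i \<noteq> 0"
    then have "z $ i < 0" using z by (auto simp: nonpos_def less_le)
    define t where "t = min (d / 2) (- z $ i)"
    have "t > 0" using \<open>z $ i < 0\<close> \<open>d > 0\<close> by (simp add: t_def)
    have "t * v $ i \<le> \<bar>v $ i\<bar> / 2 * \<bar>t\<bar>"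
      using \<open>d > 0\<close> \<open>t > 0\<close> by (intro move) (auto simp: t_def)
    then show False
      using mult_pos_pos[of t "v $ i"] \<open>t > 0\<close> \<open>0 \<le> v $ i\<close> False by simp
  qed
  ultimately show ?thesis by simp
qed simp

lemma limiting_normal_nonpos:
  assumes v: "v \<in> limiting_normal nonpos (z::real^'m)"
  shows "0 \<le> v $ i \<and> v $ i * z $ i = 0"
proof -
  have "z \<in> nonpos" using v unfolding limiting_normal_def by (auto split: if_splits)
  then obtain zs vs where "\<forall>k. zs k \<in> nonpos" "zs \<longlonglongrightarrow> z" "vs \<longlonglongrightarrow> v"
    and reg: "\<forall>k. vs k \<in> regular_normal nonpos (zs k)"
    using v unfolding limiting_normal_def by auto
  then have k: "0 \<le> vs k $ i \<and> vs k $ i * zs k $ i = 0" for k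
    using regular_normal_nonpos by blast
  have "(\<lambda>k. vs k $ i) \<longlonglongrightarrow> v $ i" "(\<lambda>k. vs k $ i * zs k $ i) \<longlonglongrightarrow> v $ i * z $ i"
    by (intro tendsto_intros \<open>vs \<longlonglongrightarrow> v\<close> \<open>zs \<longlonglongrightarrow> z\<close>)+
  moreover have "(\<lambda>k. vs k $ i * zs k $ i) = (\<lambda>k. 0)" using k by auto
  ultimately have lim: "(\<lambda>k. vs k $ i) \<longlonglongrightarrow> v $ i" and lim0: "(\<lambda>k. 0) \<longlonglongrightarrow> v $ i * z $ i"
    by simp_all
  have "0 \<le> v $ i"
    by (rule tendsto_lowerbound[OF lim]) (use k in auto)
  moreover have "v $ i * z $ i = 0"
    using LIMSEQ_unique[OF lim0 tendsto_const] by simp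
  ultimately show ?thesis by simp
qed

section \<open>Lipschitz and upper-\<open>C\<^sup>2\<close> functions on compact sets\<close>

lemma compact_uniform_local_constant:
  fixes K :: "'a::metric_space set"
  assumes K: "compact K" and local: "\<forall>z\<in>K. \<exists>d>0. \<exists>c::real. P z d c"
  shows "\<exists>r>0. \<exists>c. \<forall>p\<in>K. \<exists>z d c'. P z d c' \<and> ball p r \<subseteq> ball z d \<and> c' \<le> c"
proof -
  obtain D C where DC: "\<forall>z\<in>K. D z > 0 \<and> P z (D z) (C z)"
    using bchoice[OF local] by (metis prod.collapse)
  have "K \<subseteq> (\<Union>z\<in>K. ball z (D z / 2))" using DC by force
  then obtain F where F: "F \<subseteq> K" "finite F" "K \<subseteq> (\<Union>z\<in>F. ball z (D z / 2))"
    using compactE_image[OF K, of K "\<lambda>z. ball z (D z / 2)"] by blast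
  show ?thesis
  proof (cases "F = {}")
    case True
    then show ?thesis using F by (intro exI[of _ 1]) auto
  next
    case False
    define r where "r = Min (D ` F) / 2"
    have "r > 0" using F False DC by (auto simp: r_def)
    moreover have "\<exists>z d c'. P z d c' \<and> ball p r \<subseteq> ball z d \<and> c' \<le> Max (C ` F)" if "p \<in> K" for p
    proof -
      obtain z where "z \<in> F" and pz: "dist z p < D z / 2" using F \<open>p \<in> K\<close> by auto
      have "r \<le> D z / 2" using F \<open>z \<in> F\<close> by (simp add: r_def)
      have "ball p r \<subseteq> ball z (D z)"
      proof
        fix q
        assume "q \<in> ball p r"
        then have "dist p q < r" by simp
        then show "q \<in> ball z (D z)"
          using dist_triangle[of z q p] pz \<open>r \<le> D z / 2\<close> by simp
      qed
      then show ?thesis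
        using DC F \<open>z \<in> F\<close> by (intro exI[of _ z] exI[of _ "D z"] exI[of _ "C z"]) auto
    qed
    ultimately show ?thesis by blast
  qed
qed

lemma loc_lipschitz_at_isCont:
  fixes f :: "'a::euclidean_space \<Rightarrow> real"
  assumes "loc_lipschitz_at f z"
  shows "isCont f z"
proof -
  obtain d K where "d > 0" and lip: "\<forall>a\<in>ball z d. \<forall>b\<in>ball z d. \<bar>f a - f b\<bar> \<le> K * norm (a - b)"
    using assms unfolding loc_lipschitz_at_def by blast
  have "\<bar>K\<bar>-lipschitz_on (ball z d) f"
  proof (rule lipschitz_onI)
    fix a b assume "a \<in> ball z d" "b \<in> ball z d"
    have "K * norm (a - b) \<le> \<bar>K\<bar> * norm (a - b)" by (intro mult_right_mono) auto
    moreover have "\<bar>f a - f b\<bar> \<le> K * norm (a - b)"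
      using lip \<open>a \<in> ball z d\<close> \<open>b \<in> ball z d\<close> by blast
    ultimately show "dist (f a) (f b) \<le> \<bar>K\<bar> * dist a b"
      by (simp add: dist_norm dist_real_def)
  qed simp
  then show ?thesis
    using lipschitz_on_continuous_on continuous_on_interior \<open>d > 0\<close> by fastforce
qed

lemma loc_lipschitz_bounded_on_compact:
  fixes f :: "'a::euclidean_space \<Rightarrow> real"
  assumes "compact K" and "\<forall>z\<in>K. loc_lipschitz_at f z"
  shows "\<exists>B. \<forall>z\<in>K. \<bar>f z\<bar> \<le> B"
proof -
  have "continuous_on K f"
    using assms(2) loc_lipschitz_at_isCont by (blast intro: continuous_at_imp_continuous_on)
  then have "bounded (f ` K)"
    using compact_continuous_image[OF _ assms(1)] compact_imp_bounded by blast
  then show ?thesis by (auto simp: bounded_iff)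
qed

lemma regular_subdiff_norm_le_lipschitz:
  fixes f :: "'a::euclidean_space \<Rightarrow> real"
  assumes lip: "\<forall>a\<in>ball p r. \<forall>b\<in>ball p r. \<bar>f a - f b\<bar> \<le> c * norm (a - b)" and "0 \<le> c"
    and x: "x \<in> ball p r" and v: "v \<in> regular_subdiff f x"
  shows "norm v \<le> c"
proof (cases "v = 0")
  case False
  obtain \<epsilon> where "\<epsilon> > 0" and "ball x \<epsilon> \<subseteq> ball p r"
    using x open_ball openE by metis
  define u where "u = (1 / norm v) *\<^sub>R v"
  have "norm u = 1" and vu: "inner v u = norm v"
    using False by (simp_all add: u_def power2_norm_eq_inner[symmetric] power2_eq_square)
  have "norm v \<le> c + e * 1" if "e > 0" for e
  proof -
    obtain \<delta> where "\<delta> > 0" and \<delta>: "\<And>z. norm (z - x) < \<delta> \<Longrightarrow>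
        f x + inner v (z - x) - e * norm (z - x) \<le> f z"
      using v \<open>e > 0\<close> unfolding regular_subdiff_def by blast
    define s where "s = min \<delta> \<epsilon> / 2"
    have "s > 0" "s < \<delta>" "s < \<epsilon>" using \<open>\<delta> > 0\<close> \<open>\<epsilon> > 0\<close> by (auto simp: s_def)
    have z: "norm (x + s *\<^sub>R u - x) = s" using \<open>s > 0\<close> \<open>norm u = 1\<close> by simp
    then have "f x + s * norm v - e * s \<le> f (x + s *\<^sub>R u)"
      using \<delta>[of "x + s *\<^sub>R u"] \<open>s < \<delta>\<close> vu by (simp add: inner_scaleR_right)
    moreover have "x + s *\<^sub>R u \<in> ball x \<epsilon>"
      using z \<open>s < \<epsilon>\<close> by (simp add: dist_norm norm_minus_commute)
    then have "x + s *\<^sub>R u \<in> ball p r"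
      using \<open>ball x \<epsilon> \<subseteq> ball p r\<close> by blast
    then have "f (x + s *\<^sub>R u) - f x \<le> c * s"
      using lip x z by force
    ultimately have "s * norm v \<le> s * (c + e)" by (simp add: algebra_simps)
    then show ?thesis using \<open>s > 0\<close> by simp
  qed
  then show ?thesis by (rule le_of_forall_pos_le_add_mult)
qed (use \<open>0 \<le> c\<close> in simp)

lemma limiting_subdiff_norm_le_lipschitz:
  fixes f :: "'a::euclidean_space \<Rightarrow> real"
  assumes lip: "\<forall>a\<in>ball p r. \<forall>b\<in>ball p r. \<bar>f a - f b\<bar> \<le> c * norm (a - b)" and "0 \<le> c"
    and x: "x \<in> ball p r" and v: "v \<in> limiting_subdiff f x"
  shows "norm v \<le> c"
proof -
  obtain xs vs where "xs \<longlonglongrightarrow> x" "vs \<longlonglongrightarrow> v" and reg: "\<And>k. vs k \<in> regular_subdiff f (xs k)"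
    using v unfolding limiting_subdiff_def by blast
  have "eventually (\<lambda>k. xs k \<in> ball p r) sequentially"
    using topological_tendstoD[OF \<open>xs \<longlonglongrightarrow> x\<close> open_ball x] .
  then have "eventually (\<lambda>k. norm (vs k) \<le> c) sequentially"
    by eventually_elim (rule regular_subdiff_norm_le_lipschitz[OF lip \<open>0 \<le> c\<close> _ reg])
  then show ?thesis
    using tendsto_upperbound[OF tendsto_norm[OF \<open>vs \<longlonglongrightarrow> v\<close>]] by simp
qed

lemma limiting_subdiff_bounded_on_compact:
  fixes f :: "'a::euclidean_space \<Rightarrow> real"
  assumes K: "compact K" and lip: "\<forall>z\<in>K. loc_lipschitz_at f z"
  shows "\<exists>c. \<forall>x\<in>K. \<forall>v\<in>limiting_subdiff f x. norm v \<le> c"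
proof -
  define P where "P = (\<lambda>z d c. \<forall>a\<in>ball z d. \<forall>b\<in>ball z d. \<bar>f a - f b\<bar> \<le> c * norm (a - b))"
  have "\<forall>z\<in>K. \<exists>d>0. \<exists>c. P z d c" using lip unfolding loc_lipschitz_at_def P_def by blast
  then obtain r c where "r > 0" and rc: "\<forall>p\<in>K. \<exists>z d c'. P z d c' \<and> ball p r \<subseteq> ball z d \<and> c' \<le> c"
    using compact_uniform_local_constant[OF K] by blast
  have "norm v \<le> max c 0" if "x \<in> K" "v \<in> limiting_subdiff f x" for x v
  proof -
    obtain z d c' where "P z d c'" "ball x r \<subseteq> ball z d" "c' \<le> c" using rc \<open>x \<in> K\<close> by blast
    moreover have "c' * norm (a - b) \<le> max c 0 * norm (a - b)" for a b :: 'a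
      using \<open>c' \<le> c\<close> by (intro mult_right_mono) auto
    ultimately have "\<forall>a\<in>ball x r. \<forall>b\<in>ball x r. \<bar>f a - f b\<bar> \<le> max c 0 * norm (a - b)"
      unfolding P_def by (meson order_trans subsetD)
    then show ?thesis
      using limiting_subdiff_norm_le_lipschitz[OF _ _ _ \<open>v \<in> limiting_subdiff f x\<close>] \<open>r > 0\<close> by simp
  qed
  then show ?thesis by blast
qed

lemma convex_on_norm_square: "convex_on UNIV (\<lambda>z::'a::real_inner. (norm z)\<^sup>2)"
proof (rule convex_onI)
  fix t :: real and a b :: 'a
  assume "0 < t" "t < 1"
  then show "(norm ((1 - t) *\<^sub>R a + t *\<^sub>R b))\<^sup>2 \<le> (1 - t) * (norm a)\<^sup>2 + t * (norm b)\<^sup>2"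
    unfolding norm_square_convex_combination by simp
qed simp

lemma concave_on_extrapolation:
  assumes conc: "concave_on S h" and "z \<in> S" "w \<in> S" "s > 0" and x: "z + s *\<^sub>R w = (1 + s) *\<^sub>R x"
  shows "h z + s * h w \<le> (1 + s) * h x"
proof -
  define t where "t = s / (1 + s)"
  have t: "0 \<le> t" "t \<le> 1" "(1 + s) * (1 - t) = 1" "(1 + s) * t = s"
    using \<open>s > 0\<close> by (simp_all add: t_def field_simps)
  then have "(1 + s) *\<^sub>R ((1 - t) *\<^sub>R z + t *\<^sub>R w) = (1 + s) *\<^sub>R x"
    using x by (simp add: scaleR_add_right)
  then have "(1 - t) *\<^sub>R z + t *\<^sub>R w = x"
    using \<open>s > 0\<close> by simp
  then have "(1 - t) * h z + t * h w \<le> h x"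
    using concave_onD[OF conc t(1,2) \<open>z \<in> S\<close> \<open>w \<in> S\<close>] by simp
  then have "(1 + s) * ((1 - t) * h z + t * h w) \<le> (1 + s) * h x"
    using \<open>s > 0\<close> by (simp add: mult_left_mono)
  moreover have "(1 + s) * ((1 - t) * h z + t * h w) = h z + s * h w"
    by (simp only: distrib_left mult.assoc[symmetric] t(3,4) mult_1)
  ultimately show ?thesis by simp
qed

lemma concave_regular_supergradient:
  fixes h :: "'a::euclidean_space \<Rightarrow> real"
  assumes conc: "concave_on (ball p r) h" and x: "x \<in> ball p r" and w: "w \<in> ball p r"
    and u: "u \<in> regular_subdiff h x"
  shows "h w \<le> h x + inner u (w - x)"
proof -
  define d where "d = w - x"
  obtain \<epsilon> where "\<epsilon> > 0" and "ball x \<epsilon> \<subseteq> ball p r"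
    using x open_ball openE by metis
  have "h w \<le> h x + inner u d + e * norm d" if "e > 0" for e
  proof -
    obtain \<delta> where "\<delta> > 0" and \<delta>: "\<And>z. norm (z - x) < \<delta> \<Longrightarrow>
        h x + inner u (z - x) - e * norm (z - x) \<le> h z"
      using u \<open>e > 0\<close> unfolding regular_subdiff_def by blast
    define m where "m = min \<delta> \<epsilon>"
    define N where "N = norm d + 1"
    define s where "s = m / (2 * N)"
    have "m > 0" "N > 0" using \<open>\<delta> > 0\<close> \<open>\<epsilon> > 0\<close> by (simp_all add: m_def N_def add_nonneg_pos)
    then have "s > 0" "s * N = m / 2" by (simp_all add: s_def)
    moreover have "s * norm d \<le> s * N"
      using \<open>s > 0\<close> by (intro mult_left_mono) (auto simp: N_def)
    ultimately have "s * norm d < m" using \<open>m > 0\<close> by linarith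
    text \<open>The backward point \<open>z = x - s d\<close> puts \<open>x\<close> between \<open>z\<close> and \<open>w\<close>.\<close>
    define z where "z = x - s *\<^sub>R d"
    have zx: "norm (z - x) = s * norm d" using \<open>s > 0\<close> by (simp add: z_def)
    then have "z \<in> ball x \<epsilon>"
      using \<open>s * norm d < m\<close> by (simp add: m_def dist_norm norm_minus_commute)
    then have "z \<in> ball p r"
      using \<open>ball x \<epsilon> \<subseteq> ball p r\<close> by blast
    have lower: "h x - s * inner u d - e * (s * norm d) \<le> h z"
      using \<delta>[of z] zx \<open>s * norm d < m\<close> \<open>s > 0\<close> by (simp add: m_def z_def inner_scaleR_right)
    have "h z + s * h w \<le> (1 + s) * h x"
      by (rule concave_on_extrapolation[OF conc \<open>z \<in> ball p r\<close> w \<open>s > 0\<close>])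
        (simp add: z_def d_def algebra_simps)
    with lower have "s * h w \<le> s * (h x + inner u d + e * norm d)"
      by (simp add: algebra_simps)
    then show ?thesis using \<open>s > 0\<close> by simp
  qed
  then show ?thesis
    unfolding d_def by (rule le_of_forall_pos_le_add_mult)
qed

lemma regular_subdiff_minus_quadratic:
  fixes f :: "'a::euclidean_space \<Rightarrow> real"
  assumes v: "v \<in> regular_subdiff f x" and "\<rho> \<ge> 0"
  shows "v - \<rho> *\<^sub>R x \<in> regular_subdiff (\<lambda>z. f z - \<rho>/2 * (norm z)\<^sup>2) x"
  unfolding regular_subdiff_def
proof (intro CollectI allI impI)
  fix e :: real
  assume "e > 0"
  then have "e / 2 > 0" by simp
  then obtain \<delta> where "\<delta> > 0" and \<delta>: "\<And>z. norm (z - x) < \<delta> \<Longrightarrow>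
      f x + inner v (z - x) - e / 2 * norm (z - x) \<le> f z"
    using v unfolding regular_subdiff_def by blast
  have "f x - \<rho>/2 * (norm x)\<^sup>2 + inner (v - \<rho> *\<^sub>R x) (z - x) - e * norm (z - x)
          \<le> f z - \<rho>/2 * (norm z)\<^sup>2"
    if z: "norm (z - x) < min \<delta> (e / (\<rho> + 1))" for z
  proof -
    have sq: "(norm z)\<^sup>2 = (norm x)\<^sup>2 + 2 * inner x (z - x) + (norm (z - x))\<^sup>2"
      using dot_norm[of x "z - x"] by simp
    have "f z - \<rho>/2 * (norm z)\<^sup>2 - (f x - \<rho>/2 * (norm x)\<^sup>2 + inner (v - \<rho> *\<^sub>R x) (z - x))
        = f z - f x - inner v (z - x) - \<rho>/2 * (norm (z - x))\<^sup>2"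
      unfolding sq by (simp add: inner_diff_left algebra_simps)
    moreover have "norm (z - x) * (\<rho> + 1) < e"
      using z \<open>\<rho> \<ge> 0\<close> by (simp add: pos_less_divide_eq)
    then have "norm (z - x) + \<rho> * norm (z - x) < e"
      by (simp add: algebra_simps)
    then have "\<rho> * norm (z - x) \<le> e"
      using norm_ge_zero[of "z - x"] by linarith
    then have "\<rho> * norm (z - x) * norm (z - x) \<le> e * norm (z - x)"
      by (rule mult_right_mono) simp
    then have "\<rho>/2 * (norm (z - x))\<^sup>2 \<le> e / 2 * norm (z - x)"
      by (simp add: power2_eq_square)
    ultimately show ?thesis
      using \<delta>[of z] z by simp
  qed
  then show "\<exists>d>0. \<forall>z. norm (z - x) < d \<longrightarrow> f x - \<rho>/2 * (norm x)\<^sup>2 + inner (v - \<rho> *\<^sub>R x) (z - x)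
      - e * norm (z - x) \<le> f z - \<rho>/2 * (norm z)\<^sup>2"
    using \<open>\<delta> > 0\<close> \<open>e > 0\<close> \<open>\<rho> \<ge> 0\<close> by (intro exI[of _ "min \<delta> (e / (\<rho> + 1))"]) auto
qed

lemma upper_C2_regular_local:
  fixes f :: "'a::euclidean_space \<Rightarrow> real"
  assumes "\<rho> \<ge> 0" and conc: "concave_on (ball p r) (\<lambda>z. f z - \<rho>/2 * (norm z)\<^sup>2)"
    and "x \<in> ball p r" "w \<in> ball p r" and v: "v \<in> regular_subdiff f x"
  shows "f w \<le> f x + inner v (w - x) + \<rho>/2 * (norm (w - x))\<^sup>2"
proof -
  have "f w - \<rho>/2 * (norm w)\<^sup>2 \<le> f x - \<rho>/2 * (norm x)\<^sup>2 + inner (v - \<rho> *\<^sub>R x) (w - x)"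
    using concave_regular_supergradient[OF conc assms(3,4) regular_subdiff_minus_quadratic[OF v \<open>\<rho> \<ge> 0\<close>]] .
  moreover have "(norm w)\<^sup>2 = (norm x)\<^sup>2 + 2 * inner x (w - x) + (norm (w - x))\<^sup>2"
    using dot_norm[of x "w - x"] by simp
  ultimately show ?thesis by (simp add: inner_diff_left algebra_simps)
qed

lemma upper_C2_limiting_local:
  fixes f :: "'a::euclidean_space \<Rightarrow> real"
  assumes "\<rho> \<ge> 0" and conc: "concave_on (ball p r) (\<lambda>z. f z - \<rho>/2 * (norm z)\<^sup>2)"
    and x: "x \<in> ball p r" and w: "w \<in> ball p r" and v: "v \<in> limiting_subdiff f x"
  shows "f w \<le> f x + inner v (w - x) + \<rho>/2 * (norm (w - x))\<^sup>2"
proof -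
  obtain xs vs where "xs \<longlonglongrightarrow> x" "(\<lambda>k. f (xs k)) \<longlonglongrightarrow> f x" "vs \<longlonglongrightarrow> v"
    and reg: "\<And>k. vs k \<in> regular_subdiff f (xs k)"
    using v unfolding limiting_subdiff_def by blast
  then have "(\<lambda>k. f (xs k) + inner (vs k) (w - xs k) + \<rho>/2 * (norm (w - xs k))\<^sup>2)
      \<longlonglongrightarrow> f x + inner v (w - x) + \<rho>/2 * (norm (w - x))\<^sup>2"
    by (intro tendsto_intros)
  moreover have "eventually (\<lambda>k. xs k \<in> ball p r) sequentially"
    using topological_tendstoD[OF \<open>xs \<longlonglongrightarrow> x\<close> open_ball x] .
  then have "eventually (\<lambda>k. f w \<le> f (xs k) + inner (vs k) (w - xs k) + \<rho>/2 * (norm (w - xs k))\<^sup>2) sequentially"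
    by eventually_elim (rule upper_C2_regular_local[OF \<open>\<rho> \<ge> 0\<close> conc _ w reg])
  ultimately show ?thesis by (rule tendsto_lowerbound) simp
qed

lemma upper_C2_uniform_on_compact:
  fixes f :: "'a::euclidean_space \<Rightarrow> real"
  assumes K: "compact K" and uC2: "\<forall>z\<in>K. upper_C2_at f z"
  shows "\<exists>r>0. \<exists>\<rho>\<ge>0. \<forall>p\<in>K. concave_on (ball p r) (\<lambda>z. f z - \<rho>/2 * (norm z)\<^sup>2)"
proof -
  define P where "P = (\<lambda>z d c. c \<ge> 0 \<and> concave_on (ball z d) (\<lambda>w. f w - c/2 * (norm w)\<^sup>2))"
  have "\<forall>z\<in>K. \<exists>d>0. \<exists>c. P z d c" using uC2 unfolding upper_C2_at_def P_def by blast
  then obtain r c where "r > 0" and rc: "\<forall>p\<in>K. \<exists>z d c'. P z d c' \<and> ball p r \<subseteq> ball z d \<and> c' \<le> c"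
    using compact_uniform_local_constant[OF K] by blast
  have "concave_on (ball p r) (\<lambda>z. f z - max c 0/2 * (norm z)\<^sup>2)" if "p \<in> K" for p
  proof -
    obtain z d c' where "c' \<ge> 0" and conc: "concave_on (ball z d) (\<lambda>w. f w - c'/2 * (norm w)\<^sup>2)"
      and "ball p r \<subseteq> ball z d" "c' \<le> c"
      using rc \<open>p \<in> K\<close> unfolding P_def by blast
    have "concave_on (ball p r) (\<lambda>w. f w - c'/2 * (norm w)\<^sup>2)"
      using conc \<open>ball p r \<subseteq> ball z d\<close> unfolding concave_on_def by (rule convex_on_subset) simp
    moreover have "convex_on (ball p r) (\<lambda>w. (max c 0 - c')/2 * (norm w)\<^sup>2)"
      using \<open>c' \<le> c\<close> by (intro convex_on_cmul convex_on_subset[OF convex_on_norm_square]) auto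
    then have "concave_on (ball p r) (\<lambda>w. - ((max c 0 - c')/2 * (norm w)\<^sup>2))"
      by (simp add: concave_on_def)
    ultimately have "concave_on (ball p r)
        (\<lambda>w. (f w - c'/2 * (norm w)\<^sup>2) + - ((max c 0 - c')/2 * (norm w)\<^sup>2))"
      by (rule concave_on_add)
    then show ?thesis by (simp add: algebra_simps diff_divide_distrib)
  qed
  moreover have "max c 0 \<ge> 0" by simp
  ultimately show ?thesis using \<open>r > 0\<close> by blast
qed

lemma quadratic_majorant_far_from_base:
  fixes f :: "'a::real_inner \<Rightarrow> real"
  assumes "\<bar>f a\<bar> \<le> B" "\<bar>f b\<bar> \<le> B" "norm v \<le> c" "norm (b - a) \<le> D"
    and "0 < r" "r \<le> norm (b - a)"
  shows "f b \<le> f a + inner v (b - a) + (2 * (2 * B + c * D) / r\<^sup>2) / 2 * (norm (b - a))\<^sup>2"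
proof -
  have "0 \<le> c" using assms(3) norm_ge_zero[of v] by linarith
  then have "norm v * norm (b - a) \<le> c * D"
    using assms(3,4) by (intro mult_mono) auto
  then have "f b - f a - inner v (b - a) \<le> 2 * B + c * D"
    using assms(1,2) Cauchy_Schwarz_ineq2[of v "b - a"] by (simp add: abs_le_iff)
  also have "\<dots> = (2 * (2 * B + c * D) / r\<^sup>2) / 2 * r\<^sup>2" using \<open>0 < r\<close> by simp
  also have "\<dots> \<le> (2 * (2 * B + c * D) / r\<^sup>2) / 2 * (norm (b - a))\<^sup>2"
  proof (rule mult_left_mono)
    show "r\<^sup>2 \<le> (norm (b - a))\<^sup>2" using assms(5,6) by (simp add: power_mono)
    have "0 \<le> B" "0 \<le> D" using assms(1,4) norm_ge_zero[of "b - a"] by linarith+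
    then show "0 \<le> 2 * (2 * B + c * D) / r\<^sup>2 / 2" using \<open>0 \<le> c\<close> by simp
  qed
  finally show ?thesis by simp
qed

text \<open>Near the base point this is the local concavity; far from it, where
  \<open>norm (b - a) \<ge> r\<close>, the left side is bounded on \<open>K\<close> and is absorbed by a large curvature.\<close>
lemma upper_C2_quadratic_upper_bound:
  fixes f :: "'a::euclidean_space \<Rightarrow> real"
  assumes K: "compact K" and uC2: "\<forall>z\<in>K. upper_C2_at f z" and lip: "\<forall>z\<in>K. loc_lipschitz_at f z"
  shows "\<exists>\<rho>\<ge>0. \<forall>a\<in>K. \<forall>b\<in>K. \<forall>v\<in>limiting_subdiff f a.
           f b \<le> f a + inner v (b - a) + \<rho>/2 * (norm (b - a))\<^sup>2"
proof -
  obtain r \<rho> where "r > 0" "\<rho> \<ge> 0"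
    and conc: "\<forall>p\<in>K. concave_on (ball p r) (\<lambda>z. f z - \<rho>/2 * (norm z)\<^sup>2)"
    using upper_C2_uniform_on_compact[OF K uC2] by blast
  obtain B where B: "\<forall>z\<in>K. \<bar>f z\<bar> \<le> B"
    using loc_lipschitz_bounded_on_compact[OF K lip] by blast
  obtain c where c: "\<forall>x\<in>K. \<forall>v\<in>limiting_subdiff f x. norm v \<le> c"
    using limiting_subdiff_bounded_on_compact[OF K lip] by blast
  obtain R where R: "\<forall>z\<in>K. norm z \<le> R"
    using compact_imp_bounded[OF K] by (auto simp: bounded_iff)
  define C where "C = 2 * B + c * (2 * R)"
  define \<rho>' where "\<rho>' = max \<rho> (2 * C / r\<^sup>2)"
  have "f b \<le> f a + inner v (b - a) + \<rho>'/2 * (norm (b - a))\<^sup>2"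
    if "a \<in> K" "b \<in> K" "v \<in> limiting_subdiff f a" for a b v
  proof (cases "b \<in> ball a r")
    case True
    have "\<rho>/2 * (norm (b - a))\<^sup>2 \<le> \<rho>'/2 * (norm (b - a))\<^sup>2"
      by (simp add: \<rho>'_def mult_right_mono)
    then show ?thesis
      using upper_C2_limiting_local[OF \<open>\<rho> \<ge> 0\<close> conc[rule_format, OF \<open>a \<in> K\<close>] _ True \<open>v \<in> _\<close>]
        \<open>r > 0\<close> by simp
  next
    case False
    then have "r \<le> norm (b - a)" by (simp add: dist_norm norm_minus_commute)
    moreover have "norm a \<le> R" "norm b \<le> R" using R \<open>a \<in> K\<close> \<open>b \<in> K\<close> by auto
    then have "norm (b - a) \<le> 2 * R" using norm_triangle_ineq4[of b a] by linarith
    ultimately have "f b \<le> f a + inner v (b - a) + (2 * C / r\<^sup>2) / 2 * (norm (b - a))\<^sup>2"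
      using quadratic_majorant_far_from_base[of f a B b v c "2 * R" r] B c that \<open>r > 0\<close>
      unfolding C_def by blast
    moreover have "2 * C / r\<^sup>2 \<le> \<rho>'" unfolding \<rho>'_def by (rule max.cobounded2)
    then have "(2 * C / r\<^sup>2) / 2 * (norm (b - a))\<^sup>2 \<le> \<rho>'/2 * (norm (b - a))\<^sup>2"
      by (intro mult_right_mono divide_right_mono) auto
    ultimately show ?thesis by linarith
  qed
  moreover have "\<rho>' \<ge> 0" using \<open>\<rho> \<ge> 0\<close> by (simp add: \<rho>'_def)
  ultimately show ?thesis by blast
qed

lemma backtracking_ge:
  fixes p :: "nat \<Rightarrow> real"
  assumes "1 \<le> \<tau>" "0 \<le> p 0"
    and step: "\<And>j. j < J \<Longrightarrow> p (Suc j) = p j \<or> p (Suc j) = \<tau> * p j"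
  shows "j \<le> J \<Longrightarrow> p 0 \<le> p j"
proof (induction j)
  case (Suc j)
  then have "p 0 \<le> p j" by simp
  moreover have "p j \<le> \<tau> * p j"
    using \<open>1 \<le> \<tau>\<close> \<open>0 \<le> p 0\<close> \<open>p 0 \<le> p j\<close> by (simp add: mult_le_cancel_right1)
  ultimately show ?case using step[of j] Suc.prems by auto
qed simp

lemma backtracking_le:
  fixes p :: "nat \<Rightarrow> real"
  assumes "0 \<le> \<tau>"
    and step: "\<And>j. j < J \<Longrightarrow> p (Suc j) = p j \<or> (p (Suc j) = \<tau> * p j \<and> p j < T)"
  shows "j \<le> J \<Longrightarrow> p j \<le> max (p 0) (\<tau> * T)"
proof (induction j)
  case (Suc j)
  have "\<tau> * p j \<le> \<tau> * T" if "p j < T"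
    using \<open>0 \<le> \<tau>\<close> that by (simp add: mult_left_mono)
  then show ?case using step[of j] Suc by force
qed simp

lemma symmetric_psd_entry_bound:
  fixes Q :: "real^'n^'n"
  assumes sym: "transpose Q = Q" and "0 \<le> c"
    and bound: "\<And>z. 0 \<le> inner z (Q *v z) \<and> inner z (Q *v z) \<le> c * (norm z)\<^sup>2"
  shows "\<bar>Q $ i $ j\<bar> \<le> c"
proof -
  define a b where "a = axis i (1::real)" and "b = axis j (1::real)"
  have "Q $ i $ j = inner a (Q *v b)"
    by (simp add: a_def b_def inner_axis' matrix_vector_mult_basis column_def)
  moreover have "Q *v (- b) = - (Q *v b)"
    using matrix_vector_mult_diff_distrib[of Q 0 b] by simp
  then have "inner (a + b) (Q *v (a + b)) - inner (a + - b) (Q *v (a + - b)) = 4 * inner a (Q *v b)"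
    unfolding quadratic_form_add[OF sym]
    using inner_symmetric_matrix[OF sym, of a b] by simp
  moreover have "norm (a + b) \<le> 2" "norm (a + - b) \<le> 2"
    using norm_triangle_ineq[of a b] norm_triangle_ineq[of a "- b"] by (simp_all add: a_def b_def)
  then have "(norm (a + b))\<^sup>2 \<le> 2\<^sup>2" "(norm (a + - b))\<^sup>2 \<le> 2\<^sup>2"
    using power_mono[of "norm (a + b)" 2 2] power_mono[of "norm (a + - b)" 2 2] by simp_all
  then have "c * (norm (a + b))\<^sup>2 \<le> c * 4" "c * (norm (a + - b))\<^sup>2 \<le> c * 4"
    using \<open>0 \<le> c\<close> by (simp_all add: mult_left_mono)
  moreover note bound[of "a + b"] bound[of "a + - b"]
  ultimately show ?thesis
    unfolding abs_le_iff by linarith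
qed

lemma norm_matrix_le_entries:
  fixes A :: "real^'n^'m"
  assumes "\<And>i j. \<bar>A $ i $ j\<bar> \<le> c"
  shows "norm A \<le> real CARD('m) * real CARD('n) * c"
proof -
  have "norm A \<le> (\<Sum>i\<in>UNIV. norm (A $ i))"
    by (simp add: norm_vec_def L2_set_le_sum)
  also have "\<dots> \<le> (\<Sum>i\<in>(UNIV::'m set). real CARD('n) * c)"
  proof (rule sum_mono)
    fix i
    have "norm (A $ i) \<le> (\<Sum>j\<in>UNIV. \<bar>A $ i $ j\<bar>)" by (rule norm_le_l1_cart)
    also have "\<dots> \<le> real CARD('n) * c" using assms sum_bounded_above[of UNIV "\<lambda>j. \<bar>A $ i $ j\<bar>" c] by simp
    finally show "norm (A $ i) \<le> real CARD('n) * c" .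
  qed
  finally show ?thesis by simp
qed

lemma inner_nonneg_nonpos:
  assumes "lam \<in> nonneg" "(z::real^'m) \<in> nonpos"
  shows "inner lam z \<le> 0"
  unfolding inner_vec_def using assms
  by (intro sum_nonpos) (auto simp: nonneg_def nonpos_def mult_nonneg_nonpos)

lemma inner_nonneg_nonneg:
  assumes "\<And>i. 0 \<le> lam $ i" "\<And>i. 0 \<le> (z::real^'m) $ i"
  shows "0 \<le> inner lam z"
  unfolding inner_vec_def using assms by (intro sum_nonneg) auto

lemma inner_le_componentwise_bound:
  assumes "\<And>i. 0 \<le> lam $ i" "\<And>i. (z::real^'m) $ i \<le> a" "0 \<le> a"
  shows "inner lam z \<le> real CARD('m) * norm lam * a"
proof -
  have "lam $ i * z $ i \<le> norm lam * a" for i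
  proof -
    have "lam $ i * z $ i \<le> lam $ i * a" using assms by (simp add: mult_left_mono)
    also have "\<dots> \<le> norm lam * a"
      using assms component_le_norm_cart[of lam i] by (simp add: mult_right_mono)
    finally show ?thesis .
  qed
  then have "inner lam z \<le> (\<Sum>i\<in>(UNIV::'m set). norm lam * a)"
    unfolding inner_vec_def by (intro sum_mono) simp
  then show ?thesis by simp
qed

lemma abs_pos_part_le_norm_inf: "\<bar>pos_part (z::real^'m) $ i\<bar> \<le> norm_inf (pos_part z)"
  unfolding norm_inf_def by (rule Max_ge) auto

lemma component_le_norm_inf_pos_part: "(z::real^'m) $ i \<le> norm_inf (pos_part z)"
  using abs_pos_part_le_norm_inf[of z i] by (simp add: pos_part_def)

lemma norm_inf_pos_part_nonneg: "0 \<le> norm_inf (pos_part (z::real^'m))"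
  using abs_pos_part_le_norm_inf[of z] abs_ge_zero order_trans by blast

lemma eventually_bounded_from_cluster_points:
  fixes w :: "nat \<Rightarrow> 'a::heine_borel" and P :: "nat \<Rightarrow> real \<Rightarrow> bool"
  assumes "bounded (range w)"
    and local: "\<And>p. cluster_point w p \<Longrightarrow> \<exists>c e. e > 0 \<and> (\<forall>k. dist (w k) p < e \<longrightarrow> P k c)"
    and mono: "\<And>k c c'. P k c \<Longrightarrow> c \<le> c' \<Longrightarrow> P k c'"
  shows "\<exists>C k0. \<forall>k\<ge>k0. P k C"
proof (rule ccontr)
  assume "\<not> (\<exists>C k0. \<forall>k\<ge>k0. P k C)"
  then have "\<forall>n k0. \<exists>k\<ge>k0. \<not> P k (real n)" by blast
  then obtain \<sigma> where \<sigma>: "\<And>n k0. \<sigma> n k0 \<ge> k0" "\<And>n k0. \<not> P (\<sigma> n k0) (real n)"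
    by metis
  \<comment> \<open>Increasing indices \<open>r n\<close> at which the bound \<open>n\<close> fails; a cluster point along them contradicts \<open>local\<close>.\<close>
  define r where "r = rec_nat (\<sigma> 0 0) (\<lambda>n rn. \<sigma> (Suc n) (Suc rn))"
  have r: "r 0 = \<sigma> 0 0" "r (Suc n) = \<sigma> (Suc n) (Suc (r n))" for n
    by (simp_all add: r_def)
  have notP: "\<not> P (r n) (real n)" for n
  proof (cases n)
    case 0
    then show ?thesis using \<sigma>(2)[of 0 0] by (simp add: r)
  next
    case (Suc m)
    then show ?thesis unfolding Suc r using \<sigma>(2) by blast
  qed
  have "strict_mono r"
    unfolding strict_mono_Suc_iff using \<sigma>(1) by (simp add: r Suc_le_lessD)
  moreover obtain q l where "strict_mono q" and lim: "((w \<circ> r) \<circ> q) \<longlonglongrightarrow> l"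
    using bounded_imp_convergent_subsequence[of "w \<circ> r"] bounded_subset[OF assms(1)]
    by (metis image_comp image_subset_iff rangeI)
  ultimately have "cluster_point w l"
    unfolding cluster_point_def by (metis comp_assoc strict_mono_o)
  then obtain c e where "e > 0" and near: "\<And>k. dist (w k) l < e \<Longrightarrow> P k c"
    using local by blast
  obtain N where N: "\<And>n. n \<ge> N \<Longrightarrow> dist (w (r (q n))) l < e"
    using lim \<open>e > 0\<close> unfolding lim_sequentially by auto
  obtain m :: nat where "real m \<ge> c" using real_arch_simple by blast
  define n where "n = max N m"
  have "P (r (q n)) c" using N[of n] near by (simp add: n_def)
  moreover have "c \<le> real (q n)"
    using \<open>real m \<ge> c\<close> seq_suble[OF \<open>strict_mono q\<close>, of n] by (simp add: n_def)
  ultimately show False using notP mono by blast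
qed

lemma linear_bound_from_quadratic:
  fixes D t a b \<mu> :: real
  assumes "0 < \<mu>" "0 \<le> D" "0 \<le> t" "0 \<le> a" "0 \<le> b"
    and quad: "\<mu> * D\<^sup>2 \<le> a * t * D + b * t\<^sup>2"
  shows "D \<le> max 1 ((a + b) / \<mu>) * t"
proof (cases "D \<le> t")
  case True
  have "t \<le> max 1 ((a + b) / \<mu>) * t"
    using mult_right_mono[OF max.cobounded1[of 1 "(a + b) / \<mu>"] \<open>0 \<le> t\<close>] by simp
  with True show ?thesis by simp
next
  case False
  then have "t * t \<le> t * D" using \<open>0 \<le> t\<close> by (simp add: mult_left_mono)
  then have "b * t\<^sup>2 \<le> b * t * D" using \<open>0 \<le> b\<close> by (simp add: power2_eq_square mult_left_mono mult.assoc)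
  then have "(\<mu> * D) * D \<le> ((a + b) * t) * D"
    using quad by (simp add: power2_eq_square algebra_simps)
  then have "\<mu> * D \<le> (a + b) * t" using False \<open>0 \<le> t\<close> by simp
  then have "D \<le> (a + b) / \<mu> * t" using \<open>0 < \<mu>\<close> by (simp add: field_simps)
  also have "\<dots> \<le> max 1 ((a + b) / \<mu>) * t"
    using mult_right_mono[OF max.cobounded2[of "(a + b) / \<mu>" 1] \<open>0 \<le> t\<close>] by simp
  finally show ?thesis .
qed

section \<open>The iterates of iMBA\<close>

locale imba =
  fixes g0 :: "real^'n::finite \<Rightarrow> real"
    and g :: "real^'n \<Rightarrow> real^'m::finite"
    and phi :: "real^'n \<Rightarrow> real"
    and Oset :: "(real^'n) set"
    and mumin mumax Lmin Lmax M betaC betaS alpha tau :: real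
    and x xi :: "nat \<Rightarrow> real^'n"
    and V :: "nat \<Rightarrow> real^'n^'m"
    and mu :: "nat \<Rightarrow> nat \<Rightarrow> real"
    and L :: "nat \<Rightarrow> nat \<Rightarrow> real^'m"
    and Q :: "nat \<Rightarrow> nat \<Rightarrow> real^'n^'n"
    and y v xbar :: "nat \<Rightarrow> nat \<Rightarrow> real^'n"
    and lam :: "nat \<Rightarrow> nat \<Rightarrow> real^'m"
    and jk :: "nat \<Rightarrow> nat"
  assumes Gamma_sub: "feas g \<subseteq> Oset"
    and g0_lip: "\<And>z. z \<in> Oset \<Longrightarrow> loc_lipschitz_at g0 z"
    and g0_uC2: "\<And>z. z \<in> Oset \<Longrightarrow> upper_C2_at g0 z"
    and g_lip: "\<And>i z. loc_lipschitz_at (\<lambda>w. g w $ i) z"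
    and g_uC2: "\<And>i z. upper_C2_at (\<lambda>w. g w $ i) z"
    and phi_convex: "convex_on UNIV phi"
    and mumin_pos: "0 < mumin" and Lmin_pos: "0 < Lmin" and M_nonneg: "0 \<le> M"
    and betaC_pos: "0 < betaC" and betaS_pos: "0 < betaS" and tau_ge: "1 \<le> tau"
    and x0_feas: "x 0 \<in> feas g"
    and xi_sub: "\<And>k. xi k \<in> limiting_subdiff g0 (x k)"
    and V_sub: "\<And>k i. V k $ i \<in> limiting_subdiff (\<lambda>w. g w $ i) (x k)"
    and mu0: "\<And>k. mumin \<le> mu k 0 \<and> mu k 0 \<le> mumax"
    and L0: "\<And>k i. Lmin \<le> L k 0 $ i \<and> L k 0 $ i \<le> Lmax"
    and Q_sym: "\<And>k j. j \<le> jk k \<Longrightarrow> transpose (Q k j) = Q k j"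
    and Q_bnd: "\<And>k j z. j \<le> jk k \<Longrightarrow> mu k j * (norm z)\<^sup>2 \<le> inner z (Q k j *v z)
                 \<and> inner z (Q k j *v z) \<le> (mu k j + M) * (norm z)\<^sup>2"
    and xbar_feas: "\<And>k j. j \<le> jk k \<Longrightarrow> Gmaj g (xbar k j) (x k) (V k) (L k j) \<in> nonpos"
    and xbar_min: "\<And>k j z. j \<le> jk k \<Longrightarrow> Gmaj g z (x k) (V k) (L k j) \<in> nonpos \<Longrightarrow>
          Fmodel g0 phi (x k) (xi k) (Q k j) (xbar k j) \<le> Fmodel g0 phi (x k) (xi k) (Q k j) z"
    and v_sub: "\<And>k j. j \<le> jk k \<Longrightarrow> v k j \<in> limiting_subdiff phi (y k j)"
    and lam_nonneg: "\<And>k j. j \<le> jk k \<Longrightarrow> lam k j \<in> nonneg"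
    and y_descent: "\<And>k j. j \<le> jk k \<Longrightarrow>
          Fmodel g0 phi (x k) (xi k) (Q k j) (y k j) \<le> Fmodel g0 phi (x k) (xi k) (Q k j) (x k)"
    and y_feas_inexact: "\<And>k j. j \<le> jk k \<Longrightarrow>
          max (- inner (lam k j) (Gmaj g (y k j) (x k) (V k) (L k j))) 0
          + norm_inf (pos_part (Gmaj g (y k j) (x k) (V k) (L k j)))
          \<le> betaC / 2 * (norm (y k j - x k))\<^sup>2"
    and y_stat_inexact: "\<And>k j. j \<le> jk k \<Longrightarrow>
          norm (xi k + Q k j *v (y k j - x k) + v k j + transpose (V k) *v lam k j
                + inner (L k j) (lam k j) *\<^sub>R (y k j - x k))
          \<le> betaS * norm (y k j - x k)"
    and accept_feas: "\<And>k. g (y k (jk k)) \<in> nonpos"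
    and reject: "\<And>k j. j < jk k \<Longrightarrow> g (y k j) \<in> nonpos \<Longrightarrow>
          \<not> Fobj g0 g phi (y k j) \<le> Fobj g0 g phi (x k) - ereal (alpha / 2 * (norm (y k j - x k))\<^sup>2)"
    and upd_infeas: "\<And>k j. j < jk k \<Longrightarrow> g (y k j) \<notin> nonpos \<Longrightarrow>
          L k (Suc j) = tau *\<^sub>R L k j \<and> mu k (Suc j) = mu k j"
    and upd_feas: "\<And>k j. j < jk k \<Longrightarrow> g (y k j) \<in> nonpos \<Longrightarrow>
          L k (Suc j) = L k j \<and> mu k (Suc j) = tau * mu k j"
    and x_next: "\<And>k. x (Suc k) = y k (jk k)"
    and x_bounded: "bounded (range x)"
    and BMP: "\<And>us xs. cluster_point (\<lambda>k. ((x k, L k (jk k), V k, xi k, Q k (jk k)), xbar k (jk k))) (us, xs)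
               \<Longrightarrow> partial_BMP g us xs"
begin

abbreviation model :: "nat \<Rightarrow> nat \<Rightarrow> real^'n \<Rightarrow> real" where
  "model k j \<equiv> Fmodel g0 phi (x k) (xi k) (Q k j)"

abbreviation majorant :: "nat \<Rightarrow> nat \<Rightarrow> real^'n \<Rightarrow> real^'m" where
  "majorant k j z \<equiv> Gmaj g z (x k) (V k) (L k j)"

lemma mu_ge_mumin:
  assumes "j \<le> jk k"
  shows "mumin \<le> mu k j"
proof -
  have "mu k (Suc i) = mu k i \<or> mu k (Suc i) = tau * mu k i" if "i < jk k" for i
    using upd_infeas[OF that] upd_feas[OF that] by blast
  moreover have "0 \<le> mu k 0" using mu0[of k] mumin_pos by linarith
  ultimately have "mu k 0 \<le> mu k j"
    using backtracking_ge[of tau "mu k" "jk k" j] tau_ge assms by blast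
  then show ?thesis using mu0[of k] by linarith
qed

lemma Q_ge_mumin:
  assumes "j \<le> jk k"
  shows "mumin * (norm z)\<^sup>2 \<le> inner z (Q k j *v z)"
  using Q_bnd[OF assms, of z] mult_right_mono[OF mu_ge_mumin[OF assms], of "(norm z)\<^sup>2"] by simp

lemma Q_psd:
  assumes "j \<le> jk k"
  shows "0 \<le> inner z (Q k j *v z)"
  using Q_ge_mumin[OF assms, of z] mumin_pos by (meson order_trans mult_nonneg_nonneg less_imp_le zero_le_power2)

lemma L_ge_Lmin:
  assumes "j \<le> jk k"
  shows "Lmin \<le> L k j $ i"
proof -
  have "L k (Suc l) $ i = L k l $ i \<or> L k (Suc l) $ i = tau * L k l $ i" if "l < jk k" for l
    using upd_infeas[OF that] upd_feas[OF that] by fastforce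
  moreover have "0 \<le> L k 0 $ i" using L0[of k i] Lmin_pos by linarith
  ultimately have "L k 0 $ i \<le> L k j $ i"
    using backtracking_ge[of tau "\<lambda>l. L k l $ i" "jk k" j] tau_ge assms by blast
  then show ?thesis using L0[of k i] by linarith
qed

lemma L_nonneg: "j \<le> jk k \<Longrightarrow> 0 \<le> L k j $ i"
  using L_ge_Lmin[of j k i] Lmin_pos by linarith

lemma x_feasible: "g (x k) \<in> nonpos"
  using x0_feas accept_feas x_next by (cases k) (simp_all add: feas_def)

lemma majorant_at_center: "majorant k j (x k) = g (x k)"
  by (simp add: Gmaj_def)

lemma feas_closed: "closed (feas g)"
proof -
  have "continuous_on UNIV (\<lambda>w. g w $ i)" for i
    using g_lip loc_lipschitz_at_isCont by (blast intro: continuous_at_imp_continuous_on)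
  then have "closed {w. g w $ i \<le> 0}" for i
    using closed_Collect_le[OF _ continuous_on_const] by blast
  moreover have "feas g = (\<Inter>i. {w. g w $ i \<le> 0})"
    by (auto simp: feas_def nonpos_def)
  ultimately show ?thesis by auto
qed

subsection \<open>Boundedness of the generated data\<close>

lemma closure_range_x: "compact (closure (range x))" "x k \<in> closure (range x)"
  using x_bounded compact_closure by (blast, simp add: closure_def)

lemma xi_bounded: "\<exists>B. \<forall>k. norm (xi k) \<le> B"
proof -
  have "closure (range x) \<subseteq> feas g"
    by (rule closure_minimal) (use x_feasible feas_closed in \<open>auto simp: feas_def\<close>)
  then have "\<forall>z\<in>closure (range x). loc_lipschitz_at g0 z"
    using Gamma_sub g0_lip by blast
  then obtain B where "\<forall>z\<in>closure (range x). \<forall>u\<in>limiting_subdiff g0 z. norm u \<le> B"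
    using limiting_subdiff_bounded_on_compact[OF closure_range_x(1)] by blast
  then have "norm (xi k) \<le> B" for k
    using xi_sub[of k] closure_range_x(2)[of k] by blast
  then show ?thesis by blast
qed

lemma V_bounded: "bounded (range V)"
proof -
  have "\<exists>c. \<forall>z\<in>closure (range x). \<forall>u\<in>limiting_subdiff (\<lambda>w. g w $ i) z. norm u \<le> c" for i
    using limiting_subdiff_bounded_on_compact[OF closure_range_x(1)] g_lip by blast
  then obtain c where c: "\<And>i. \<forall>z\<in>closure (range x). \<forall>u\<in>limiting_subdiff (\<lambda>w. g w $ i) z. norm u \<le> c i"
    by metis
  have "norm (V k) \<le> (\<Sum>i\<in>UNIV. c i)" for k
  proof -
    have "norm (V k) \<le> (\<Sum>i\<in>UNIV. norm (V k $ i))" by (simp add: norm_vec_def L2_set_le_sum)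
    also have "\<dots> \<le> (\<Sum>i\<in>UNIV. c i)"
    proof (rule sum_mono)
      fix i
      show "norm (V k $ i) \<le> c i" using c[of i] V_sub[of k i] closure_range_x(2)[of k] by blast
    qed
    finally show ?thesis .
  qed
  then show ?thesis by (auto simp: bounded_iff)
qed

lemma phi_bounded_on_balls: "\<exists>B. \<forall>z. norm z \<le> R \<longrightarrow> \<bar>phi z\<bar> \<le> B"
proof -
  have "continuous_on (cball 0 R) phi"
    using convex_on_continuous[OF open_UNIV phi_convex] by (rule continuous_on_subset) simp
  then have "bounded (phi ` cball 0 R)"
    by (rule compact_imp_bounded[OF compact_continuous_image[OF _ compact_cball]])
  then show ?thesis by (metis bounded_iff image_eqI mem_cball_0 real_norm_def)
qed

text \<open>The model is strongly convex with modulus \<open>mumin\<close> uniformly in \<open>k, j\<close>, while its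
  linear and nonsmooth parts grow at most linearly; this confines its sublevel set at \<open>x k\<close>.\<close>
lemma model_sublevel_bounded:
  "\<exists>R. \<forall>k j z. j \<le> jk k \<longrightarrow> model k j z \<le> model k j (x k) \<longrightarrow> norm (z - x k) \<le> R"
proof -
  obtain Bx where Bx: "\<And>k. norm (x k) \<le> Bx" using x_bounded by (auto simp: bounded_iff)
  obtain Bxi where Bxi: "\<And>k. norm (xi k) \<le> Bxi" using xi_bounded by blast
  obtain Bphi where Bphi: "\<And>z. norm z \<le> Bx + 1 \<Longrightarrow> \<bar>phi z\<bar> \<le> Bphi"
    using phi_bounded_on_balls by blast
  define R where "R = max 1 (2 * (Bxi + 2 * Bphi) / mumin)"
  have "norm (z - x k) \<le> R" if "j \<le> jk k" and descent: "model k j z \<le> model k j (x k)" for k j z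
  proof (cases "norm (z - x k) \<le> 1")
    case False
    define t where "t = norm (z - x k)"
    have "1 < t" using False by (simp add: t_def)
    have "model k j z - model k j (x k)
        = inner (xi k) (z - x k) + 1/2 * inner (z - x k) (Q k j *v (z - x k)) + phi z - phi (x k)"
      using Fmodel_diff[OF Q_sym[OF \<open>j \<le> jk k\<close>], of g0 phi "x k" "xi k" z "x k"] by simp
    moreover have "mumin * t\<^sup>2 \<le> inner (z - x k) (Q k j *v (z - x k))"
      using Q_ge_mumin[OF \<open>j \<le> jk k\<close>] by (simp add: t_def)
    moreover have "- 2 * Bphi * t \<le> phi z - phi (x k)"
      using convex_linear_lower_growth[OF phi_convex Bphi Bx] False by (simp add: t_def)
    moreover have "- (Bxi * t) \<le> inner (xi k) (z - x k)"
      using Cauchy_Schwarz_ineq2[of "xi k" "z - x k"] mult_right_mono[OF Bxi[of k], of t] \<open>1 < t\<close>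
      by (simp add: t_def abs_le_iff)
    ultimately have "(mumin * t) * t \<le> (2 * (Bxi + 2 * Bphi)) * t"
      using descent by (simp add: power2_eq_square algebra_simps)
    then have "mumin * t \<le> 2 * (Bxi + 2 * Bphi)" using \<open>1 < t\<close> by simp
    then have "t \<le> 2 * (Bxi + 2 * Bphi) / mumin"
      using mumin_pos by (simp add: pos_le_divide_eq mult.commute)
    then show ?thesis unfolding R_def t_def by linarith
  qed (simp add: R_def)
  then show ?thesis by blast
qed

lemma iterates_bounded:
  "\<exists>R. \<forall>k j. j \<le> jk k \<longrightarrow> norm (x k) \<le> R \<and> norm (y k j) \<le> R \<and> norm (xbar k j) \<le> R"
proof -
  obtain Bx where Bx: "\<And>k. norm (x k) \<le> Bx" using x_bounded by (auto simp: bounded_iff)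
  obtain R where R: "\<And>k j z. j \<le> jk k \<Longrightarrow> model k j z \<le> model k j (x k) \<Longrightarrow> norm (z - x k) \<le> R"
    using model_sublevel_bounded by blast
  have "norm (x k) \<le> Bx + R \<and> norm (y k j) \<le> Bx + R \<and> norm (xbar k j) \<le> Bx + R"
    if "j \<le> jk k" for k j
  proof -
    have "norm (y k j - x k) \<le> R" using R y_descent that by blast
    moreover have "norm (xbar k j - x k) \<le> R"
      using R xbar_min[OF that] x_feasible that by (simp add: majorant_at_center)
    moreover have "0 \<le> R" using R[OF that y_descent[OF that]] norm_ge_zero order_trans by blast
    ultimately show ?thesis
      using Bx[of k] norm_triangle_sub[of "y k j" "x k"] norm_triangle_sub[of "xbar k j" "x k"] by simp
  qed
  then show ?thesis by blast
qed

lemma majorant_at_trial_le: "j \<le> jk k \<Longrightarrow> majorant k j (y k j) $ i \<le> betaC / 2 * (norm (y k j - x k))\<^sup>2"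
  using y_feas_inexact[of j k] component_le_norm_inf_pos_part[of "majorant k j (y k j)" i] by linarith


lemma g_upper_quadratic:
  "\<exists>\<rho>. \<forall>k j i. j \<le> jk k \<longrightarrow>
     g (y k j) $ i \<le> g (x k) $ i + inner (V k $ i) (y k j - x k) + \<rho>/2 * (norm (y k j - x k))\<^sup>2"
proof -
  obtain R where R: "\<And>k j. j \<le> jk k \<Longrightarrow> norm (x k) \<le> R \<and> norm (y k j) \<le> R"
    using iterates_bounded by blast
  have "\<exists>\<rho>\<ge>0. \<forall>a\<in>cball 0 R. \<forall>b\<in>cball 0 R. \<forall>u\<in>limiting_subdiff (\<lambda>w. g w $ i) a.
          g b $ i \<le> g a $ i + inner u (b - a) + \<rho>/2 * (norm (b - a))\<^sup>2" for i
    using upper_C2_quadratic_upper_bound[OF compact_cball] g_uC2 g_lip by blast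
  then obtain \<rho> where \<rho>: "\<And>i. \<forall>a\<in>cball 0 R. \<forall>b\<in>cball 0 R. \<forall>u\<in>limiting_subdiff (\<lambda>w. g w $ i) a.
          g b $ i \<le> g a $ i + inner u (b - a) + \<rho> i/2 * (norm (b - a))\<^sup>2"
    by metis
  have "g (y k j) $ i \<le> g (x k) $ i + inner (V k $ i) (y k j - x k) + Max (range \<rho>)/2 * (norm (y k j - x k))\<^sup>2"
    if "j \<le> jk k" for k j i
  proof -
    have "\<rho> i \<le> Max (range \<rho>)" by simp
    then have "\<rho> i/2 * (norm (y k j - x k))\<^sup>2 \<le> Max (range \<rho>)/2 * (norm (y k j - x k))\<^sup>2"
      by (simp add: mult_right_mono)
    moreover have "x k \<in> cball 0 R" "y k j \<in> cball 0 R" using R[OF that] by simp_all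
    ultimately show ?thesis using \<rho>[of i] V_sub[of k i] by fastforce
  qed
  then show ?thesis by blast
qed

lemma g0_upper_quadratic:
  "\<exists>\<rho>. \<forall>k j. j \<le> jk k \<longrightarrow> g (y k j) \<in> nonpos \<longrightarrow>
     g0 (y k j) \<le> g0 (x k) + inner (xi k) (y k j - x k) + \<rho>/2 * (norm (y k j - x k))\<^sup>2"
proof -
  obtain R where R: "\<And>k j. j \<le> jk k \<Longrightarrow> norm (x k) \<le> R \<and> norm (y k j) \<le> R"
    using iterates_bounded by blast
  define K where "K = feas g \<inter> cball 0 R"
  have "compact K" unfolding K_def using feas_closed by (intro closed_Int_compact) auto
  moreover have "K \<subseteq> Oset" using Gamma_sub by (auto simp: K_def)
  ultimately obtain \<rho> where \<rho>: "\<forall>a\<in>K. \<forall>b\<in>K. \<forall>u\<in>limiting_subdiff g0 a.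
      g0 b \<le> g0 a + inner u (b - a) + \<rho>/2 * (norm (b - a))\<^sup>2"
    using upper_C2_quadratic_upper_bound[of K g0] g0_uC2 g0_lip by blast
  have "x k \<in> K" "y k j \<in> K" if "j \<le> jk k" "g (y k j) \<in> nonpos" for k j
    using R[OF that(1)] x_feasible that(2) by (auto simp: K_def feas_def)
  then show ?thesis using \<rho> xi_sub by blast
qed

text \<open>For large \<open>L $ i\<close> the majorant dominates \<open>g $ i\<close>, so the trial point would satisfy
  constraint \<open>i\<close>.\<close>
lemma infeasible_trial_L_small: "\<exists>T. \<forall>k j i. j \<le> jk k \<longrightarrow> 0 < g (y k j) $ i \<longrightarrow> L k j $ i < T"
proof -
  obtain \<rho> where \<rho>: "\<And>k j i. j \<le> jk k \<Longrightarrow>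
      g (y k j) $ i \<le> g (x k) $ i + inner (V k $ i) (y k j - x k) + \<rho>/2 * (norm (y k j - x k))\<^sup>2"
    using g_upper_quadratic by blast
  have "L k j $ i < \<rho> + betaC" if "j \<le> jk k" "0 < g (y k j) $ i" for k j i
  proof (rule ccontr)
    assume "\<not> L k j $ i < \<rho> + betaC"
    define t2 where "t2 = (norm (y k j - x k))\<^sup>2"
    have "1/2 * t2 * (\<rho> + betaC) \<le> 1/2 * t2 * L k j $ i"
      using \<open>\<not> L k j $ i < \<rho> + betaC\<close> by (intro mult_left_mono) (auto simp: t2_def)
    moreover have "g (x k) $ i + inner (V k $ i) (y k j - x k) + 1/2 * t2 * L k j $ i \<le> betaC/2 * t2"
      using majorant_at_trial_le[OF that(1), of i] by (simp add: Gmaj_component t2_def)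
    ultimately have "g (y k j) $ i \<le> 0"
      using \<rho>[OF that(1), of i] by (simp add: t2_def algebra_simps)
    then show False using that(2) by simp
  qed
  then show ?thesis by blast
qed

lemma L_components_proportional:
  "j \<le> jk k \<Longrightarrow> L k j $ i * L k 0 $ i' = L k j $ i' * L k 0 $ i"
proof (induction j)
  case (Suc j)
  then have "j < jk k" by simp
  then show ?case
    using Suc upd_infeas[OF \<open>j < jk k\<close>] upd_feas[OF \<open>j < jk k\<close>]
    by (cases "g (y k j) \<in> nonpos") (simp_all add: mult.assoc)
qed simp

lemma L_bounded: "\<exists>B. \<forall>k j i. j \<le> jk k \<longrightarrow> L k j $ i \<le> B"
proof -
  obtain T where T: "\<And>k j i. j \<le> jk k \<Longrightarrow> 0 < g (y k j) $ i \<Longrightarrow> L k j $ i < T"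
    using infeasible_trial_L_small by blast
  define T' where "T' = T * Lmax / Lmin"
  have step: "L k (Suc l) $ i = L k l $ i \<or> (L k (Suc l) $ i = tau * L k l $ i \<and> L k l $ i < T')"
    if "l < jk k" for k l i
  proof (cases "g (y k l) \<in> nonpos")
    case True
    then show ?thesis using upd_feas[OF that] by simp
  next
    case False
    then obtain i' where "0 < g (y k l) $ i'" by (auto simp: nonpos_def not_le)
    then have "L k l $ i' < T" using T that by simp
    have "L k l $ i * Lmin \<le> L k l $ i * L k 0 $ i'"
      using L_nonneg[of l k i] L0[of k i'] that by (simp add: mult_left_mono)
    also have "\<dots> = L k l $ i' * L k 0 $ i"
      using L_components_proportional[of l k i i'] that by simp
    also have "\<dots> \<le> L k l $ i' * Lmax"
      using L_nonneg[of l k i'] L0[of k i] that by (simp add: mult_left_mono)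
    also have "\<dots> < T * Lmax"
      using \<open>L k l $ i' < T\<close> L0[of k i] Lmin_pos by simp
    finally have "L k l $ i < T'"
      using Lmin_pos by (simp add: T'_def pos_less_divide_eq)
    then show ?thesis using upd_infeas[OF that False] by simp
  qed
  have "L k j $ i \<le> max Lmax (tau * T')" if "j \<le> jk k" for k j i
    using backtracking_le[where \<tau>=tau and p="\<lambda>l. L k l $ i" and J="jk k" and T=T'] step that tau_ge L0[of k i]
    by fastforce
  then show ?thesis by blast
qed

text \<open>For large \<open>mu\<close> the model decrease together with the upper-\<open>C\<^sup>2\<close> bound on \<open>g0\<close> yields
  sufficient decrease, so a feasible trial point would be accepted.\<close>
lemma rejected_feasible_trial_mu_small:
  "\<exists>T. \<forall>k j. j < jk k \<longrightarrow> g (y k j) \<in> nonpos \<longrightarrow> mu k j < T"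
proof -
  obtain \<rho> where \<rho>: "\<And>k j. j \<le> jk k \<Longrightarrow> g (y k j) \<in> nonpos \<Longrightarrow>
      g0 (y k j) \<le> g0 (x k) + inner (xi k) (y k j - x k) + \<rho>/2 * (norm (y k j - x k))\<^sup>2"
    using g0_upper_quadratic by blast
  have "mu k j < \<rho> + alpha" if "j < jk k" "g (y k j) \<in> nonpos" for k j
  proof (rule ccontr)
    assume "\<not> mu k j < \<rho> + alpha"
    define t2 where "t2 = (norm (y k j - x k))\<^sup>2"
    have "j \<le> jk k" using that by simp
    have "(\<rho> + alpha) * t2 \<le> inner (y k j - x k) (Q k j *v (y k j - x k))"
      using \<open>\<not> mu k j < \<rho> + alpha\<close> Q_bnd[OF \<open>j \<le> jk k\<close>, of "y k j - x k"]
        mult_right_mono[of "\<rho> + alpha" "mu k j" t2] by (simp add: t2_def)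
    moreover have "model k j (y k j) - model k j (x k)
        = inner (xi k) (y k j - x k) + 1/2 * inner (y k j - x k) (Q k j *v (y k j - x k))
          + phi (y k j) - phi (x k)"
      using Fmodel_diff[OF Q_sym[OF \<open>j \<le> jk k\<close>], of g0 phi "x k" "xi k" "y k j" "x k"] by simp
    ultimately have "g0 (y k j) + phi (y k j) \<le> g0 (x k) + phi (x k) - alpha / 2 * t2"
      using y_descent[OF \<open>j \<le> jk k\<close>] \<rho>[OF \<open>j \<le> jk k\<close> that(2)] by (simp add: t2_def algebra_simps)
    then show False
      using reject[OF that] that(2) x_feasible[of k] by (simp add: Fobj_def t2_def)
  qed
  then show ?thesis by blast
qed

lemma mu_bounded: "\<exists>B. \<forall>k j. j \<le> jk k \<longrightarrow> mu k j \<le> B"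
proof -
  obtain T where T: "\<And>k j. j < jk k \<Longrightarrow> g (y k j) \<in> nonpos \<Longrightarrow> mu k j < T"
    using rejected_feasible_trial_mu_small by blast
  have "mu k (Suc l) = mu k l \<or> (mu k (Suc l) = tau * mu k l \<and> mu k l < T)" if "l < jk k" for k l
    using upd_infeas[OF that] upd_feas[OF that] T[OF that] by blast
  then have "mu k j \<le> max mumax (tau * T)" if "j \<le> jk k" for k j
    using backtracking_le[where \<tau>=tau and p="mu k" and J="jk k" and T=T] that tau_ge mu0[of k] by fastforce
  then show ?thesis by blast
qed

lemma Q_entries_bounded: "\<exists>C. \<forall>k j a b. j \<le> jk k \<longrightarrow> \<bar>Q k j $ a $ b\<bar> \<le> C"
proof -
  obtain B where B: "\<And>k j. j \<le> jk k \<Longrightarrow> mu k j \<le> B" using mu_bounded by blast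
  have "\<bar>Q k j $ a $ b\<bar> \<le> B + M" if "j \<le> jk k" for k j a b
  proof -
    have "0 \<le> mu k j + M" using mu_ge_mumin[OF that] mumin_pos M_nonneg by linarith
    moreover have "\<And>z. 0 \<le> inner z (Q k j *v z) \<and> inner z (Q k j *v z) \<le> (mu k j + M) * (norm z)\<^sup>2"
      using Q_psd[OF that] Q_bnd[OF that] by blast
    ultimately have "\<bar>Q k j $ a $ b\<bar> \<le> mu k j + M"
      by (rule symmetric_psd_entry_bound[OF Q_sym[OF that]])
    then show ?thesis using B[OF that] by linarith
  qed
  then show ?thesis by blast
qed

lemma Q_mult_bounded: "\<exists>C. \<forall>k j d. j \<le> jk k \<longrightarrow> norm (Q k j *v d) \<le> C * norm d"
proof -
  obtain C where C: "\<And>k j a b. j \<le> jk k \<Longrightarrow> \<bar>Q k j $ a $ b\<bar> \<le> C"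
    using Q_entries_bounded by blast
  have "norm (Q k j *v d) \<le> real CARD('n) * real CARD('n) * C * norm d" if "j \<le> jk k" for k j d
    using onorm[OF matrix_vector_mul_bounded_linear, of "Q k j" d]
      onorm_le_matrix_component[of "Q k j" C] C[OF that]
    by (meson mult_right_mono norm_ge_zero order_trans)
  then show ?thesis by blast
qed


subsection \<open>Bounded multipliers of the exact subproblems\<close>

definition upar :: "nat \<Rightarrow> ('n, 'm) param" where
  "upar k = (x k, L k (jk k), V k, xi k, Q k (jk k))"

lemma Spar_upar: "Spar g (upar k) = {z. majorant k (jk k) z \<in> nonpos}"
  by (simp add: Spar_def Hpar_def upar_def)

lemma upar_in_Upar: "upar k \<in> Upar"
  using L_nonneg[of "jk k" k] Q_sym[of "jk k" k] Q_psd[of "jk k" k]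
  by (simp add: Upar_def upar_def nonneg_def)

lemma xbar_in_Spar: "xbar k (jk k) \<in> Spar g (upar k)"
  using xbar_feas[of "jk k" k] by (simp add: Spar_upar)

lemma exact_optimality:
  "\<exists>vb. (\<forall>w. phi (xbar k (jk k)) + inner vb (w - xbar k (jk k)) \<le> phi w)
      \<and> (\<forall>z\<in>Spar g (upar k). 0 \<le> inner (xi k + Q k (jk k) *v (xbar k (jk k) - x k) + vb) (z - xbar k (jk k)))"
proof -
  have "convex (Spar g (upar k))"
    unfolding Spar_upar by (rule Gmaj_feasible_set_convex) (simp add: L_nonneg)
  moreover have "\<forall>z\<in>Spar g (upar k). model k (jk k) (xbar k (jk k)) \<le> model k (jk k) z"
    using xbar_min[of "jk k" k] by (simp add: Spar_upar)
  ultimately show ?thesis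
    using Fmodel_minimizer_optimality[OF Q_sym Q_psd phi_convex _ xbar_in_Spar] by blast
qed

definition vbar :: "nat \<Rightarrow> real^'n" where
  "vbar k = (SOME vb. (\<forall>w. phi (xbar k (jk k)) + inner vb (w - xbar k (jk k)) \<le> phi w)
      \<and> (\<forall>z\<in>Spar g (upar k). 0 \<le> inner (xi k + Q k (jk k) *v (xbar k (jk k) - x k) + vb) (z - xbar k (jk k))))"

definition grad_bar :: "nat \<Rightarrow> real^'n" where
  "grad_bar k = xi k + Q k (jk k) *v (xbar k (jk k) - x k) + vbar k"

lemma vbar_subgradient: "phi (xbar k (jk k)) + inner (vbar k) (w - xbar k (jk k)) \<le> phi w"
  and grad_bar_normal: "z \<in> Spar g (upar k) \<Longrightarrow> 0 \<le> inner (grad_bar k) (z - xbar k (jk k))"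
  using someI_ex[OF exact_optimality[of k]] unfolding vbar_def[symmetric] grad_bar_def by blast+

lemma neg_grad_bar_limiting_normal: "- grad_bar k \<in> limiting_normal (Spar g (upar k)) (xbar k (jk k))"
  using grad_bar_normal by (intro limiting_normal_of_convex_normal xbar_in_Spar) (simp add: inner_minus_left)

lemma grad_bar_bounded: "\<exists>B. \<forall>k. norm (grad_bar k) \<le> B"
proof -
  obtain R where R: "\<And>k j. j \<le> jk k \<Longrightarrow> norm (x k) \<le> R \<and> norm (xbar k j) \<le> R"
    using iterates_bounded by blast
  obtain Bxi where Bxi: "\<And>k. norm (xi k) \<le> Bxi" using xi_bounded by blast
  obtain C where C: "\<And>k j d. j \<le> jk k \<Longrightarrow> norm (Q k j *v d) \<le> C * norm d"
    using Q_mult_bounded by blast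
  obtain Bphi where Bphi: "\<And>z. norm z \<le> R + 1 \<Longrightarrow> \<bar>phi z\<bar> \<le> Bphi"
    using phi_bounded_on_balls by blast
  have "norm (grad_bar k) \<le> Bxi + \<bar>C\<bar> * (2 * R) + 2 * Bphi" for k
  proof -
    have "norm (xbar k (jk k) - x k) \<le> 2 * R"
      using R[of "jk k" k] norm_triangle_ineq4[of "xbar k (jk k)" "x k"] by simp
    then have "\<bar>C\<bar> * norm (xbar k (jk k) - x k) \<le> \<bar>C\<bar> * (2 * R)"
      by (rule mult_left_mono) simp
    moreover have "C * norm (xbar k (jk k) - x k) \<le> \<bar>C\<bar> * norm (xbar k (jk k) - x k)"
      by (rule mult_right_mono) simp_all
    moreover have "norm (vbar k) \<le> 2 * Bphi"
      using convex_subgradient_norm_le[OF vbar_subgradient Bphi] R[of "jk k" k] by simp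
    ultimately show ?thesis
      using Bxi[of k] C[of "jk k" k "xbar k (jk k) - x k"]
        norm_triangle_ineq[of "xi k + Q k (jk k) *v (xbar k (jk k) - x k)" "vbar k"]
        norm_triangle_ineq[of "xi k" "Q k (jk k) *v (xbar k (jk k) - x k)"]
      unfolding grad_bar_def by linarith
  qed
  then show ?thesis by blast
qed

lemma bounded_upar_xbar: "bounded (range (\<lambda>k. (upar k, xbar k (jk k))))"
proof -
  obtain R where R: "\<And>k j. j \<le> jk k \<Longrightarrow> norm (xbar k j) \<le> R"
    using iterates_bounded by blast
  obtain BL where BL: "\<And>k j i. j \<le> jk k \<Longrightarrow> L k j $ i \<le> BL" using L_bounded by blast
  obtain BQ where BQ: "\<And>k j a b. j \<le> jk k \<Longrightarrow> \<bar>Q k j $ a $ b\<bar> \<le> BQ"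
    using Q_entries_bounded by blast
  obtain Bxi where Bxi: "\<And>k. norm (xi k) \<le> Bxi" using xi_bounded by blast
  have "norm (L k (jk k)) \<le> real CARD('m) * BL" for k
  proof -
    have "norm (L k (jk k)) \<le> (\<Sum>i\<in>UNIV. \<bar>L k (jk k) $ i\<bar>)" by (rule norm_le_l1_cart)
    also have "\<dots> \<le> (\<Sum>i\<in>(UNIV::'m set). BL)"
      using BL L_nonneg by (intro sum_mono) (simp add: abs_of_nonneg)
    finally show ?thesis by simp
  qed
  then have "bounded (range (\<lambda>k. L k (jk k)))" by (auto simp: bounded_iff)
  moreover have "norm (Q k (jk k)) \<le> real CARD('n) * real CARD('n) * BQ" for k
    using norm_matrix_le_entries BQ[of "jk k" k] by blast
  then have "bounded (range (\<lambda>k. Q k (jk k)))" by (auto simp: bounded_iff)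
  moreover have "bounded (range xi)" "bounded (range (\<lambda>k. xbar k (jk k)))"
    using Bxi R by (auto simp: bounded_iff)
  ultimately have "bounded ((range x \<times> range (\<lambda>k. L k (jk k)) \<times> range V \<times> range xi \<times> range (\<lambda>k. Q k (jk k)))
      \<times> range (\<lambda>k. xbar k (jk k)))"
    using x_bounded V_bounded by (intro bounded_Times) auto
  then show ?thesis
    by (rule bounded_subset) (auto simp: upar_def)
qed

lemma eventually_bounded_multipliers:
  "\<exists>\<Lambda> k0. \<forall>k\<ge>k0. \<exists>lb\<in>Lambda_par g (upar k) (xbar k (jk k)) (- grad_bar k). norm lb \<le> \<Lambda>"
proof -
  obtain B where B: "\<And>k. norm (grad_bar k) \<le> B" using grad_bar_bounded by blast
  define P where "P = (\<lambda>k c. \<exists>lb\<in>Lambda_par g (upar k) (xbar k (jk k)) (- grad_bar k). norm lb \<le> c)"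
  have "\<exists>c e. e > 0 \<and> (\<forall>k. dist (upar k, xbar k (jk k)) p < e \<longrightarrow> P k c)"
    if "cluster_point (\<lambda>k. (upar k, xbar k (jk k))) p" for p
  proof -
    obtain us xs where p: "p = (us, xs)" by fastforce
    then have "partial_BMP g us xs" using BMP that by (simp add: upar_def)
    then obtain \<kappa> e where "\<kappa> > 0" "e > 0" and bmp: "\<forall>u\<in>Upar. dist u us < e \<longrightarrow>
        (\<forall>z. dist z xs < e \<longrightarrow> z \<in> Spar g u \<longrightarrow>
          (\<forall>w\<in>limiting_normal (Spar g u) z. \<exists>lb\<in>Lambda_par g u z w. norm lb \<le> \<kappa> * norm w))"
      unfolding partial_BMP_def by blast
    have "P k (\<kappa> * B)" if "dist (upar k, xbar k (jk k)) p < e" for k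
    proof -
      have "dist (upar k) us < e" "dist (xbar k (jk k)) xs < e"
        using that dist_fst_le[of "(upar k, xbar k (jk k))" p] dist_snd_le[of "(upar k, xbar k (jk k))" p]
        by (simp_all add: p)
      then obtain lb where lb: "lb \<in> Lambda_par g (upar k) (xbar k (jk k)) (- grad_bar k)"
          and "norm lb \<le> \<kappa> * norm (- grad_bar k)"
        using bmp upar_in_Upar[of k] xbar_in_Spar[of k] neg_grad_bar_limiting_normal[of k] by blast
      moreover have "\<kappa> * norm (- grad_bar k) \<le> \<kappa> * B"
        using B[of k] \<open>\<kappa> > 0\<close> by (simp add: mult_left_mono)
      ultimately have "norm lb \<le> \<kappa> * B" by linarith
      then show ?thesis unfolding P_def using lb by blast
    qed
    then show ?thesis using \<open>e > 0\<close> by blast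
  qed
  moreover have "P k c'" if "P k c" "c \<le> c'" for k c c'
  proof -
    obtain lb where "lb \<in> Lambda_par g (upar k) (xbar k (jk k)) (- grad_bar k)" "norm lb \<le> c"
      using \<open>P k c\<close> unfolding P_def by blast
    then show ?thesis unfolding P_def using \<open>c \<le> c'\<close> by force
  qed
  ultimately have "\<exists>C k0. \<forall>k\<ge>k0. P k C"
    by (rule eventually_bounded_from_cluster_points[OF bounded_upar_xbar])
  then show ?thesis unfolding P_def .
qed

subsection \<open>The error bound\<close>

lemma model_gap_inexact:
  assumes "j \<le> jk k"
  shows "mumin/2 * (norm (xbar k j - y k j))\<^sup>2 - betaS * norm (y k j - x k) * norm (xbar k j - y k j)
           - betaC/2 * (norm (y k j - x k))\<^sup>2
         \<le> model k j (xbar k j) - model k j (y k j)"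
proof -
  define d t D where "d = xbar k j - y k j" and "t = norm (y k j - x k)" and "D = norm d"
  define gH where "gH = gradH (x k) (L k j) (V k) (y k j) (lam k j)"
  define r where "r = xi k + Q k j *v (y k j - x k) + v k j + gH"
  have "norm r \<le> betaS * t"
    using y_stat_inexact[OF assms] by (simp add: r_def gH_def gradH_def t_def add.assoc)
  then have "- (betaS * t * D) \<le> inner r d"
    using Cauchy_Schwarz_ineq2[of r d] mult_right_mono[of "norm r" "betaS * t" D]
    by (simp add: D_def abs_le_iff)
  moreover have "inner r d = inner (xi k + Q k j *v (y k j - x k)) d + inner (v k j) d + inner gH d"
    by (simp add: r_def inner_add_left)
  moreover have "inner (v k j) d \<le> phi (xbar k j) - phi (y k j)"
    using convex_limiting_subgradient[OF phi_convex v_sub[OF assms], of "xbar k j"] by (simp add: d_def)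
  moreover have "inner (lam k j) (majorant k j (xbar k j)) - inner (lam k j) (majorant k j (y k j))
      = inner gH d + inner (L k j) (lam k j) / 2 * D\<^sup>2"
    by (simp add: inner_Gmaj_diff gH_def d_def D_def)
  moreover have "inner (lam k j) (majorant k j (xbar k j)) \<le> 0"
    by (rule inner_nonneg_nonpos[OF lam_nonneg[OF assms] xbar_feas[OF assms]])
  moreover have "- inner (lam k j) (majorant k j (y k j)) \<le> betaC/2 * t\<^sup>2"
    using y_feas_inexact[OF assms] norm_inf_pos_part_nonneg[of "majorant k j (y k j)"]
    by (simp add: t_def)
  moreover have "0 \<le> inner (L k j) (lam k j) / 2 * D\<^sup>2"
    using L_nonneg[OF assms] lam_nonneg[OF assms] by (simp add: inner_nonneg_nonneg nonneg_def)
  moreover have "mumin * D\<^sup>2 \<le> inner d (Q k j *v d)"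
    using Q_ge_mumin[OF assms] by (simp add: D_def)
  moreover have "model k j (xbar k j) - model k j (y k j)
      = inner (xi k + Q k j *v (y k j - x k)) d + 1/2 * inner d (Q k j *v d) + phi (xbar k j) - phi (y k j)"
    using Fmodel_diff[OF Q_sym[OF assms]] by (simp add: d_def)
  ultimately have "mumin/2 * D\<^sup>2 - betaS * t * D - betaC/2 * t\<^sup>2
      \<le> model k j (xbar k j) - model k j (y k j)"
    by linarith
  then show ?thesis unfolding D_def d_def t_def .
qed

lemma model_gap_exact:
  assumes lb: "lb \<in> Lambda_par g (upar k) (xbar k (jk k)) (- grad_bar k)"
  shows "mumin/2 * (norm (xbar k (jk k) - y k (jk k)))\<^sup>2
           - real CARD('m) * norm lb * (betaC/2 * (norm (y k (jk k) - x k))\<^sup>2)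
         \<le> model k (jk k) (y k (jk k)) - model k (jk k) (xbar k (jk k))"
proof -
  define j where "j = jk k"
  define xb yy where "xb = xbar k j" and "yy = y k j"
  define t D where "t = norm (yy - x k)" and "D = norm (yy - xb)"
  have j: "j \<le> jk k" by (simp add: j_def)
  have lbN: "lb \<in> limiting_normal nonpos (majorant k j xb)"
    and lbg: "gradH (x k) (L k j) (V k) xb lb = - grad_bar k"
    using lb by (simp_all add: Lambda_par_def Hpar_def upar_def j_def xb_def)
  have "\<forall>i. lb $ i * majorant k j xb $ i = 0" using limiting_normal_nonpos[OF lbN] by blast
  then have "inner lb (majorant k j xb) = 0" unfolding inner_vec_def by (intro sum.neutral) simp
  moreover have "inner lb (majorant k j yy) - inner lb (majorant k j xb)
      = - inner (grad_bar k) (yy - xb) + inner (L k j) lb / 2 * D\<^sup>2"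
    by (simp add: inner_Gmaj_diff lbg D_def)
  moreover have "0 \<le> inner (L k j) lb / 2 * D\<^sup>2"
    using L_nonneg[OF j] limiting_normal_nonpos[OF lbN] by (simp add: inner_nonneg_nonneg)
  moreover have "inner lb (majorant k j yy) \<le> real CARD('m) * norm lb * (betaC/2 * t\<^sup>2)"
    using limiting_normal_nonpos[OF lbN] majorant_at_trial_le[OF j] betaC_pos
    by (intro inner_le_componentwise_bound) (simp_all add: yy_def t_def)
  moreover have "inner (vbar k) (yy - xb) \<le> phi yy - phi xb"
    using vbar_subgradient[of k yy] by (simp add: j_def xb_def)
  moreover have "mumin * D\<^sup>2 \<le> inner (yy - xb) (Q k j *v (yy - xb))"
    using Q_ge_mumin[OF j] by (simp add: D_def)
  moreover have "model k j yy - model k j xb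
      = inner (xi k + Q k j *v (xb - x k)) (yy - xb) + 1/2 * inner (yy - xb) (Q k j *v (yy - xb)) + phi yy - phi xb"
    using Fmodel_diff[OF Q_sym[OF j]] by simp
  moreover have "inner (grad_bar k) (yy - xb) = inner (xi k + Q k j *v (xb - x k)) (yy - xb) + inner (vbar k) (yy - xb)"
    by (simp add: grad_bar_def j_def xb_def inner_add_left)
  ultimately have "mumin/2 * D\<^sup>2 - real CARD('m) * norm lb * (betaC/2 * t\<^sup>2) \<le> model k j yy - model k j xb"
    by linarith
  then show ?thesis
    unfolding t_def D_def yy_def xb_def j_def by (simp add: norm_minus_commute)
qed

lemma accepted_step_error_bound:
  assumes lb: "lb \<in> Lambda_par g (upar k) (xbar k (jk k)) (- grad_bar k)" and "norm lb \<le> \<Lambda>"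
  shows "norm (x (Suc k) - xbar k (jk k))
           \<le> max 1 ((betaS + betaC/2 + real CARD('m) * \<Lambda> * (betaC/2)) / mumin) * norm (x (Suc k) - x k)"
proof -
  define t D where "t = norm (x (Suc k) - x k)" and "D = norm (x (Suc k) - xbar k (jk k))"
  have "real CARD('m) * norm lb * (betaC/2 * t\<^sup>2) \<le> real CARD('m) * \<Lambda> * (betaC/2 * t\<^sup>2)"
    using \<open>norm lb \<le> \<Lambda>\<close> betaC_pos by (intro mult_right_mono mult_left_mono) auto
  then have "mumin * D\<^sup>2 \<le> betaS * t * D + (betaC/2 + real CARD('m) * \<Lambda> * (betaC/2)) * t\<^sup>2"
    using model_gap_inexact[of "jk k" k] model_gap_exact[OF lb]
    by (simp add: t_def D_def x_next norm_minus_commute algebra_simps)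
  moreover have "0 \<le> \<Lambda>" using \<open>norm lb \<le> \<Lambda>\<close> norm_ge_zero order_trans by blast
  ultimately show ?thesis
    using linear_bound_from_quadratic[OF mumin_pos, of D t betaS] mumin_pos betaS_pos betaC_pos
    by (simp add: t_def D_def add.assoc)
qed

end

theorem proposition4p2:
  fixes g0 :: "real^'n::finite \<Rightarrow> real"
    and g :: "real^'n \<Rightarrow> real^'m::finite"
    and phi :: "real^'n \<Rightarrow> real"
    and Oset :: "(real^'n) set"
    and mumin mumax Lmin Lmax M betaC betaS alpha tau :: real
    and x :: "nat \<Rightarrow> real^'n"
    and xi :: "nat \<Rightarrow> real^'n"
    and V :: "nat \<Rightarrow> real^'n^'m"
    and mu :: "nat \<Rightarrow> nat \<Rightarrow> real"
    and L :: "nat \<Rightarrow> nat \<Rightarrow> real^'m"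
    and Q :: "nat \<Rightarrow> nat \<Rightarrow> real^'n^'n"
    and y v xbar :: "nat \<Rightarrow> nat \<Rightarrow> real^'n"
    and lam :: "nat \<Rightarrow> nat \<Rightarrow> real^'m"
    and jk :: "nat \<Rightarrow> nat"
  \<comment> \<open>Assumption 1 (standing)\<close>
  assumes O_open: "open Oset" and O_convex: "convex Oset" and Gamma_sub: "feas g \<subseteq> Oset"
    and Gamma_ne: "feas g \<noteq> {}"
    and g0_lip: "\<forall>z\<in>Oset. loc_lipschitz_at g0 z" and g0_uC2: "\<forall>z\<in>Oset. upper_C2_at g0 z"
    and g_lip: "\<forall>i z. loc_lipschitz_at (\<lambda>w. g w $ i) z"
    and g_uC2: "\<forall>i z. upper_C2_at (\<lambda>w. g w $ i) z"
    and phi_convex: "convex_on UNIV phi"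
    and F_bdd: "\<exists>c. \<forall>z\<in>feas g. Fobj g0 g phi z \<ge> ereal c"
  \<comment> \<open>parameters of iMBA\<close>
    and par_mu: "0 < mumin" "mumin \<le> mumax"
    and par_L: "0 < Lmin" "Lmin \<le> Lmax"
    and par_pos: "M > 0" "betaC > 0" "betaS > 0" "alpha > 0"
    and par_tau: "tau > 1"
    and x0_feas: "x 0 \<in> feas g"
  \<comment> \<open>iMBA: outer choices\<close>
    and xi_sub: "\<forall>k. xi k \<in> limiting_subdiff g0 (x k)"
    and V_sub: "\<forall>k i. V k $ i \<in> limiting_subdiff (\<lambda>w. g w $ i) (x k)"
    and mu0: "\<forall>k. mumin \<le> mu k 0 \<and> mu k 0 \<le> mumax"
    and L0: "\<forall>k i. Lmin \<le> L k 0 $ i \<and> L k 0 $ i \<le> Lmax"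
  \<comment> \<open>iMBA: inner iterations j = 0, ..., jk k\<close>
    and Q_sa: "\<forall>k j. j \<le> jk k \<longrightarrow> transpose (Q k j) = Q k j"
    and Q_bnd: "\<forall>k j. j \<le> jk k \<longrightarrow> (\<forall>z. mu k j * (norm z)\<^sup>2 \<le> inner z (Q k j *v z)
                   \<and> inner z (Q k j *v z) \<le> (mu k j + M) * (norm z)\<^sup>2)"
    and xbar_min: "\<forall>k j. j \<le> jk k \<longrightarrow>
          Gmaj g (xbar k j) (x k) (V k) (L k j) \<in> nonpos \<and>
          (\<forall>z. Gmaj g z (x k) (V k) (L k j) \<in> nonpos \<longrightarrow>
             Fmodel g0 phi (x k) (xi k) (Q k j) (xbar k j) \<le> Fmodel g0 phi (x k) (xi k) (Q k j) z)"
    and v_sub: "\<forall>k j. j \<le> jk k \<longrightarrow> v k j \<in> limiting_subdiff phi (y k j)"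
    and lam_nonneg: "\<forall>k j. j \<le> jk k \<longrightarrow> lam k j \<in> nonneg"
    and y_descent: "\<forall>k j. j \<le> jk k \<longrightarrow>
          Fmodel g0 phi (x k) (xi k) (Q k j) (y k j) \<le> Fmodel g0 phi (x k) (xi k) (Q k j) (x k)"
    and y_feas_inexact: "\<forall>k j. j \<le> jk k \<longrightarrow>
          max (- inner (lam k j) (Gmaj g (y k j) (x k) (V k) (L k j))) 0
          + norm_inf (pos_part (Gmaj g (y k j) (x k) (V k) (L k j)))
          \<le> betaC / 2 * (norm (y k j - x k))\<^sup>2"
    and y_stat_inexact: "\<forall>k j. j \<le> jk k \<longrightarrow>
          norm (xi k + Q k j *v (y k j - x k) + v k j + transpose (V k) *v lam k j
                + inner (L k j) (lam k j) *\<^sub>R (y k j - x k))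
          \<le> betaS * norm (y k j - x k)"
  \<comment> \<open>iMBA: acceptance test and updates\<close>
    and accept: "\<forall>k. g (y k (jk k)) \<in> nonpos \<and>
          Fobj g0 g phi (y k (jk k)) \<le> Fobj g0 g phi (x k) - ereal (alpha / 2 * (norm (y k (jk k) - x k))\<^sup>2)"
    and reject: "\<forall>k j. j < jk k \<longrightarrow> \<not> (g (y k j) \<in> nonpos \<and>
          Fobj g0 g phi (y k j) \<le> Fobj g0 g phi (x k) - ereal (alpha / 2 * (norm (y k j - x k))\<^sup>2))"
    and upd_infeas: "\<forall>k j. j < jk k \<longrightarrow> g (y k j) \<notin> nonpos \<longrightarrow>
          L k (Suc j) = tau *\<^sub>R L k j \<and> mu k (Suc j) = mu k j"
    and upd_feas: "\<forall>k j. j < jk k \<longrightarrow> g (y k j) \<in> nonpos \<longrightarrow>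
          L k (Suc j) = L k j \<and> mu k (Suc j) = tau * mu k j"
    and x_next: "\<forall>k. x (Suc k) = y k (jk k)"
  \<comment> \<open>Assumption 2\<close>
    and A2: "\<forall>k j. j \<le> jk k \<longrightarrow>
          metric_subregular (\<lambda>z. {Gmaj g z (x k) (V k) (L k j) - w | w. w \<in> nonpos}) (xbar k j) 0"
  \<comment> \<open>Assumption 3\<close>
    and A3: "bounded (range x)"
  \<comment> \<open>Assumption 4, with u^k = (x^k, L^k, V^k, xi^k, Q_k) and xbar^k = xbar^{k, jk k}\<close>
    and A4: "\<forall>us xs. cluster_point (\<lambda>k. ((x k, L k (jk k), V k, xi k, Q k (jk k)), xbar k (jk k))) (us, xs)
               \<longrightarrow> partial_BMP g us xs"
  shows "\<exists>khat. \<exists>gam>0. \<forall>k\<ge>khat. norm (x (Suc k) - xbar k (jk k)) \<le> gam * norm (x (Suc k) - x k)"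
proof -
  interpret imba g0 g phi Oset mumin mumax Lmin Lmax M betaC betaS alpha tau x xi V mu L Q y v xbar lam jk
  proof
    show "\<And>k. g (y k (jk k)) \<in> nonpos" using accept by blast
  qed (use assms in \<open>auto simp: feas_def\<close>)
  obtain \<Lambda> k0 where \<Lambda>: "\<And>k. k \<ge> k0 \<Longrightarrow>
      \<exists>lb\<in>Lambda_par g (upar k) (xbar k (jk k)) (- grad_bar k). norm lb \<le> \<Lambda>"
    using eventually_bounded_multipliers by blast
  define gam where "gam = max 1 ((betaS + betaC/2 + real CARD('m) * \<Lambda> * (betaC/2)) / mumin)"
  have "norm (x (Suc k) - xbar k (jk k)) \<le> gam * norm (x (Suc k) - x k)" if "k \<ge> k0" for k
    using \<Lambda>[OF that] accepted_step_error_bound unfolding gam_def by blast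
  moreover have "gam > 0" by (simp add: gam_def)
  ultimately show ?thesis by blast
qed

end
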